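(* Let $\gamma$ be a nonnegative absolutely continuous random variable with probability density function $f_\gamma$, and define $\mathcal{Q}_\gamma(p)=\mathbb{E}[Q(\sqrt{p\gamma})]$. Then $\mathcal{Q}_\gamma(p)$ is defined for all $p\in[0,\infty)$, and: (i) $\mathcal{Q}_\gamma$ is continuous and decreasing on $[0,\infty)$, with $\mathcal{Q}_\gamma(0)=\tfrac12$ and $\lim_{p\to\infty}\mathcal{Q}_\gamma(p)=0$. (ii) If $\mathcal{Q}_\gamma(p)=\Phi(p)$ (with $\Phi$ understood on $\operatorname{Re}[p]>0$ via its analytic continuation), then for any $\varepsilon>0$, \[ f_\gamma(\gamma)=\frac{1}{j\sqrt{2\pi}}\frac{d}{d\gamma}\left\{\sqrt\gamma\int_{\varepsilon-j\infty}^{\varepsilon+j\infty}\frac{\Phi(p)}{\sqrt p}e^{\frac{p\gamma}{2}}\,dp\right\}. \]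
   Context: $Q(x)=\frac{1}{\sqrt{2\pi}}\int_x^\infty e^{-t^2/2}\,dt$ is the Gaussian $Q$-function; $\mathcal{Q}_\gamma$ is called the Gaussian $\mathcal{Q}$-transform of $\gamma$. $j$ denotes the imaginary unit and the integral is a Bromwich (inverse Laplace) contour integral along the vertical line $\operatorname{Re}[p]=\varepsilon$. *)

theory Defs
  imports "HOL-Probability.Probability" "HOL-Complex_Analysis.Complex_Analysis"
begin

definition gaussQ :: "real \<Rightarrow> real" where
  "gaussQ x = (1 / sqrt (2 * pi)) * (LBINT t:{x..}. exp (- (t\<^sup>2) / 2))"

definition gaussQ_transform :: "'a measure \<Rightarrow> ('a \<Rightarrow> real) \<Rightarrow> real \<Rightarrow> real" where
  "gaussQ_transform M X p = (\<integral>\<omega>. gaussQ (sqrt (p * X \<omega>)) \<partial>M)"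

text \<open>Integrand of the Bromwich integral along Re p = eps, parametrised by p = eps + j t,
  so that dp = j dt.\<close>
definition bromwich_integrand ::
  "(complex \<Rightarrow> complex) \<Rightarrow> real \<Rightarrow> real \<Rightarrow> real \<Rightarrow> complex" where
  "bromwich_integrand \<Phi> \<epsilon> x t =
     (let p = Complex \<epsilon> t in \<Phi> p / csqrt p * exp (p * complex_of_real x / 2) * \<i>)"

definition bromwich :: "(complex \<Rightarrow> complex) \<Rightarrow> real \<Rightarrow> real \<Rightarrow> complex" where
  "bromwich \<Phi> \<epsilon> x = Lim at_top (\<lambda>T. integral {-T..T} (bromwich_integrand \<Phi> \<epsilon> x))"

end

(*
  Write Q_X for the Q-transform. For Re p > 0 put G(p) = E[\<integral>_{sqrt X}^\<infinity> exp (-p u\<^sup>2/2) du].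
  The substitution t = sqrt p u gives G(p) = sqrt (2 pi / p) Q_X(p) for real p > 0, and G is
  holomorphic on the right half-plane, so by the identity theorem every holomorphic extension of
  Q_X to that half-plane equals sqrt (p / (2 pi)) G(p).

  On the line p = \<epsilon> + j t the Bromwich integrand is therefore j / sqrt (2 pi) times
  E[\<integral>_{sqrt X}^\<infinity> exp (-(\<epsilon> + j t)(u\<^sup>2 - x)/2) du]. Integrating over t \<in> [-T, T] first
  produces the Dirichlet-type kernel 2 T sinc (T (u\<^sup>2 - x)/2). Writing this kernel as a derivative
  of the sine integral and integrating by parts shows that its integrals over [sqrt a, \<infinity>) are
  bounded uniformly in T and a, and tend to 2 pi / sqrt x for a < x and to 0 for a > x.
  Dominated convergence then gives bromwich(x) = j sqrt (2 pi / x) P(X < x): the bracketed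
  function in the inversion formula is the distribution function of X, whose derivative is the
  density almost everywhere by Lebesgue's differentiation theorem.

  Part (i) follows from the strict monotonicity of Q and dominated convergence.
*)

theory Submission
  imports Defs
begin

section \<open>The Gaussian Q-function\<close>

lemma gaussQ_eq_integral: "gaussQ x = (\<integral>t. indicator {x..} t * std_normal_density t \<partial>lborel)"
  unfolding gaussQ_def normal_density_def set_lebesgue_integral_def
  by (simp add: integral_mult_right_zero[symmetric] mult_ac)

lemma std_normal_density_pos: "0 < std_normal_density t"
  by (simp add: normal_density_pos)

lemma std_normal_density_le_1: "std_normal_density t \<le> 1"
proof -
  have "1 / sqrt (2 * pi) \<le> 1"
    using pi_gt3 by (simp add: real_le_rsqrt)
  moreover have "exp (- t\<^sup>2 / 2) \<le> 1"
    by simp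
  ultimately show ?thesis
    unfolding std_normal_density_def by (intro mult_le_one) auto
qed

lemma integrable_indicator_std_normal_density:
  "A \<in> sets borel \<Longrightarrow> integrable lborel (\<lambda>t. indicator A t * std_normal_density t)"
  by (subst mult.commute, intro integrable_real_mult_indicator) auto

lemma gaussQ_nonneg: "0 \<le> gaussQ x"
  unfolding gaussQ_eq_integral
  by (intro integral_nonneg_AE) (auto simp: less_imp_le[OF std_normal_density_pos])

lemma gaussQ_le_1: "gaussQ x \<le> 1"
proof -
  have "gaussQ x \<le> (\<integral>t. std_normal_density t \<partial>lborel)"
    unfolding gaussQ_eq_integral
    by (intro integral_mono integrable_indicator_std_normal_density)
      (auto simp: indicator_def less_imp_le[OF std_normal_density_pos])
  then show ?thesis by simp
qed

lemma gaussQ_diff: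
  assumes "x \<le> y"
  shows "gaussQ x - gaussQ y = (\<integral>t. indicator {x..<y} t * std_normal_density t \<partial>lborel)"
proof -
  have "gaussQ x = (\<integral>t. indicator {x..<y} t * std_normal_density t
                       + indicator {y..} t * std_normal_density t \<partial>lborel)"
    unfolding gaussQ_eq_integral using assms
    by (intro Bochner_Integration.integral_cong) (auto simp: indicator_def)
  also have "\<dots> = (\<integral>t. indicator {x..<y} t * std_normal_density t \<partial>lborel) + gaussQ y"
    unfolding gaussQ_eq_integral
    by (intro Bochner_Integration.integral_add integrable_indicator_std_normal_density) auto
  finally show ?thesis by simp
qed

lemma std_normal_density_antimono_sq: "s\<^sup>2 \<le> t\<^sup>2 \<Longrightarrow> std_normal_density t \<le> std_normal_density s"
  unfolding std_normal_density_def by (intro mult_left_mono) auto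

lemma integrable_indicator_Ico_const:
  "integrable lborel (\<lambda>t. indicator {x..<y::real} t * (c::real))"
proof -
  have "integrable lborel (indicator {x..<y} :: real \<Rightarrow> real)"
    by (cases "x \<le> y") (auto simp: emeasure_lborel_Ico)
  then show ?thesis by simp
qed

lemma gaussQ_strict_antimono:
  assumes "x < y"
  shows "gaussQ y < gaussQ x"
proof -
  define m where "m = min (std_normal_density x) (std_normal_density y)"
  have m_pos: "m > 0"
    using std_normal_density_pos by (simp add: m_def)
  have density_ge: "m \<le> std_normal_density t" if "x \<le> t" "t \<le> y" for t
  proof -
    have "t\<^sup>2 \<le> max (x\<^sup>2) (y\<^sup>2)"
      using that by (smt (verit) power2_le_iff_abs_le abs_le_iff power2_abs)
    then show ?thesis
      using std_normal_density_antimono_sq[of t x] std_normal_density_antimono_sq[of t y]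
      unfolding m_def max_def by (auto split: if_splits)
  qed
  have "(y - x) * m = (\<integral>t. indicator {x..<y} t * m \<partial>lborel)"
    using assms by simp
  also have "\<dots> \<le> (\<integral>t. indicator {x..<y} t * std_normal_density t \<partial>lborel)"
    by (intro integral_mono integrable_indicator_std_normal_density integrable_indicator_Ico_const)
      (auto simp: indicator_def density_ge)
  finally show ?thesis
    using gaussQ_diff[of x y] assms m_pos by (smt (verit) mult_pos_pos)
qed

lemma gaussQ_antimono: "x \<le> y \<Longrightarrow> gaussQ y \<le> gaussQ x"
  using gaussQ_strict_antimono[of x y] by (cases "x = y") auto

lemma gaussQ_diff_le: "x \<le> y \<Longrightarrow> gaussQ x - gaussQ y \<le> y - x"
proof -
  assume "x \<le> y"
  have "(\<integral>t. indicator {x..<y} t * std_normal_density t \<partial>lborel)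
      \<le> (\<integral>t. indicator {x..<y} t * 1 \<partial>lborel)"
    by (intro integral_mono integrable_indicator_std_normal_density integrable_indicator_Ico_const)
      (auto simp: indicator_def std_normal_density_le_1)
  then show ?thesis
    using gaussQ_diff[OF \<open>x \<le> y\<close>] \<open>x \<le> y\<close> by simp
qed

lemma gaussQ_lipschitz: "\<bar>gaussQ x - gaussQ y\<bar> \<le> \<bar>x - y\<bar>"
proof (cases "x \<le> y")
  case True
  then show ?thesis using gaussQ_diff_le[of x y] gaussQ_antimono[of x y] by linarith
next
  case False
  then show ?thesis using gaussQ_diff_le[of y x] gaussQ_antimono[of y x] by linarith
qed

lemma continuous_on_gaussQ: "continuous_on A gaussQ"
proof (rule lipschitz_on_continuous_on)
  show "1-lipschitz_on A gaussQ"
    by (rule lipschitz_onI) (simp_all add: dist_real_def gaussQ_lipschitz)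
qed

lemma isCont_gaussQ: "isCont gaussQ x"
  using continuous_on_gaussQ[of UNIV] by (simp add: continuous_on_eq_continuous_at)

lemma borel_measurable_gaussQ[measurable]: "gaussQ \<in> borel_measurable borel"
  by (intro borel_measurable_continuous_onI continuous_on_gaussQ)

lemma gaussQ_0: "gaussQ 0 = 1 / 2"
proof -
  have reflect: "(\<integral>t. indicator {..<0} t * std_normal_density t \<partial>lborel) = gaussQ 0"
  proof -
    have "(\<integral>t. indicator {..<0} t * std_normal_density t \<partial>lborel)
        = (\<integral>t. indicator {..<0} (0 + -1 * t) * std_normal_density (0 + -1 * t) \<partial>lborel)"
      by (subst lborel_integral_real_affine[where c="-1" and t=0]) simp_all
    also have "\<dots> = (\<integral>t. indicator {0<..} t * std_normal_density t \<partial>lborel)"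
      by (simp add: indicator_def std_normal_density_def)
    also have "\<dots> = gaussQ 0"
      unfolding gaussQ_eq_integral using AE_lborel_singleton[of 0]
      by (intro integral_cong_AE) (auto simp: indicator_def elim!: eventually_mono)
    finally show ?thesis .
  qed
  have "1 = (\<integral>t. std_normal_density t \<partial>lborel)"
    by simp
  also have "\<dots> = (\<integral>t. indicator {..<0} t * std_normal_density t
                       + indicator {0..} t * std_normal_density t \<partial>lborel)"
    by (intro Bochner_Integration.integral_cong) (auto simp: indicator_def)
  also have "\<dots> = (\<integral>t. indicator {..<0} t * std_normal_density t \<partial>lborel) + gaussQ 0"
    unfolding gaussQ_eq_integral
    by (intro Bochner_Integration.integral_add integrable_indicator_std_normal_density) auto
  finally show ?thesis
    unfolding reflect by simp
qed

lemma gaussQ_le_first_moment: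
  assumes "x > 0"
  shows "gaussQ x \<le> (\<integral>t. std_normal_density t * \<bar>t\<bar> \<partial>lborel) / x"
proof -
  have "gaussQ x \<le> (\<integral>t. std_normal_density t * \<bar>t\<bar> / x \<partial>lborel)"
    unfolding gaussQ_eq_integral
  proof (intro integral_mono integrable_indicator_std_normal_density)
    show "integrable lborel (\<lambda>t. std_normal_density t * \<bar>t\<bar> / x)"
      using integrable_std_normal_moment_abs[of 1] by simp
    show "indicator {x..} t * std_normal_density t \<le> std_normal_density t * \<bar>t\<bar> / x" for t
      using assms std_normal_density_pos[of t] by (auto simp: indicator_def field_simps)
  qed auto
  then show ?thesis by simp
qed

lemma tendsto_gaussQ_at_top: "(gaussQ \<longlongrightarrow> 0) at_top"
proof (rule tendsto_sandwich[of "\<lambda>_. 0" _ _ "\<lambda>x. (\<integral>t. std_normal_density t * \<bar>t\<bar> \<partial>lborel) / x"])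
  show "\<forall>\<^sub>F x in at_top. gaussQ x \<le> (\<integral>t. std_normal_density t * \<bar>t\<bar> \<partial>lborel) / x"
    using eventually_gt_at_top[of 0] by eventually_elim (rule gaussQ_le_first_moment)
  show "((\<lambda>x. (\<integral>t. std_normal_density t * \<bar>t\<bar> \<partial>lborel) / x) \<longlongrightarrow> 0) at_top"
    by (intro tendsto_divide_0[OF tendsto_const] filterlim_at_top_imp_at_infinity[OF filterlim_ident])
qed (auto simp: gaussQ_nonneg)

section \<open>The Gaussian Q-transform\<close>

context prob_space
begin

lemma integrable_gaussQ_sqrt:
  "X \<in> borel_measurable M \<Longrightarrow> integrable M (\<lambda>\<omega>. gaussQ (sqrt (p * X \<omega>)))"
  by (rule integrable_const_bound[where B=1]) (auto simp: gaussQ_nonneg gaussQ_le_1)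

lemma continuous_on_gaussQ_transform:
  assumes [measurable]: "X \<in> borel_measurable M"
  shows "continuous_on A (gaussQ_transform M X)"
proof (rule continuous_on_sequentiallyI)
  fix u :: "nat \<Rightarrow> real" and p
  assume "u \<longlonglongrightarrow> p"
  then show "(\<lambda>n. gaussQ_transform M X (u n)) \<longlonglongrightarrow> gaussQ_transform M X p"
    unfolding gaussQ_transform_def
    by (intro integral_dominated_convergence[where w="\<lambda>_. 1"] AE_I2
        isCont_tendsto_compose[OF isCont_gaussQ] tendsto_intros)
      (auto simp: gaussQ_nonneg gaussQ_le_1)
qed

lemma gaussQ_transform_0: "gaussQ_transform M X 0 = 1 / 2"
  unfolding gaussQ_transform_def by (simp add: gaussQ_0 prob_space)

end

locale nonneg_density_rv = prob_space M for M :: "'a measure" +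
  fixes X :: "'a \<Rightarrow> real" and f :: "real \<Rightarrow> real"
  assumes X_nonneg: "\<And>\<omega>. \<omega> \<in> space M \<Longrightarrow> 0 \<le> X \<omega>"
    and f_borel[measurable]: "f \<in> borel_measurable borel"
    and f_nonneg: "\<And>x. 0 \<le> f x"
    and X_distributed: "distributed M lborel X (\<lambda>x. ennreal (f x))"
begin

lemma measurable_X[measurable]: "X \<in> borel_measurable M"
  using distributed_measurable[OF X_distributed] by simp

lemma AE_X_neq: "AE \<omega> in M. X \<omega> \<noteq> c"
proof (rule AE_I[where N="X -` {c} \<inter> space M"])
  have "emeasure M (X -` {c} \<inter> space M) = (\<integral>\<^sup>+x. ennreal (f x) * indicator {c} x \<partial>lborel)"
    by (rule distributed_emeasure[OF X_distributed]) simp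
  also have "\<dots> = 0"
    using AE_lborel_singleton[of c]
    by (subst nn_integral_0_iff_AE) (auto simp: indicator_def elim!: eventually_mono)
  finally show "emeasure M (X -` {c} \<inter> space M) = 0" .
qed auto

lemma AE_X_pos: "AE \<omega> in M. 0 < X \<omega>"
  using AE_X_neq[of 0] AE_space by eventually_elim (auto dest: X_nonneg)

lemma gaussQ_transform_strict_antimono:
  assumes "0 \<le> p" "p < q"
  shows "gaussQ_transform M X q < gaussQ_transform M X p"
  unfolding gaussQ_transform_def
proof (rule integral_less_AE_space)
  show "AE \<omega> in M. gaussQ (sqrt (q * X \<omega>)) < gaussQ (sqrt (p * X \<omega>))"
    using AE_X_pos by eventually_elim (use assms in \<open>auto intro!: gaussQ_strict_antimono\<close>)
qed (auto intro: integrable_gaussQ_sqrt simp: emeasure_space_1)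

lemma tendsto_gaussQ_transform_at_top: "(gaussQ_transform M X \<longlongrightarrow> 0) at_top"
proof -
  have "((\<lambda>p. \<integral>\<omega>. gaussQ (sqrt (p * X \<omega>)) \<partial>M) \<longlongrightarrow> (\<integral>\<omega>. 0 \<partial>M)) at_top"
  proof (rule integral_dominated_convergence_at_top[where w="\<lambda>_. 1"])
    show "AE \<omega> in M. ((\<lambda>p. gaussQ (sqrt (p * X \<omega>))) \<longlongrightarrow> 0) at_top"
      using AE_X_pos
    proof eventually_elim
      case (elim \<omega>)
      have "filterlim (\<lambda>p. sqrt (p * X \<omega>)) at_top at_top"
        using elim by (intro filterlim_compose[OF sqrt_at_top]
            filterlim_at_top_mult_tendsto_pos[OF tendsto_const] filterlim_ident)
      then show ?case
        by (rule filterlim_compose[OF tendsto_gaussQ_at_top])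
    qed
  qed (auto simp: gaussQ_nonneg gaussQ_le_1)
  then show ?thesis
    unfolding gaussQ_transform_def by simp
qed

end

section \<open>Gaussian moments, the sine integral and a Fourier integral\<close>

lemma integrable_gaussian_moment:
  assumes "c > 0"
  shows "integrable lborel (\<lambda>u::real. u ^ k * exp (- c * u\<^sup>2))"
proof -
  define s where "s = sqrt (2 * c)"
  have s: "s > 0"
    using assms by (simp add: s_def)
  have "integrable lborel (\<lambda>u. std_normal_density (0 + s * u) * (0 + s * u) ^ k)"
    using s by (intro lborel_integrable_real_affine integrable_std_normal_moment) simp
  then have "integrable lborel (\<lambda>u. sqrt (2 * pi) / s ^ k * (std_normal_density (0 + s * u) * (0 + s * u) ^ k))"
    by simp
  moreover have "sqrt (2 * pi) / s ^ k * (std_normal_density (0 + s * u) * (0 + s * u) ^ k)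
      = u ^ k * exp (- c * u\<^sup>2)" for u
    using s assms by (simp add: std_normal_density_def s_def power_mult_distrib field_simps)
  ultimately show ?thesis by simp
qed

lemma abs_sinc_le_1: "\<bar>sinc y\<bar> \<le> 1"
  using abs_sin_x_le_abs_x[of y] by (auto simp: abs_divide divide_le_eq_1)

lemma abs_sinc_le_inverse: "y \<noteq> 0 \<Longrightarrow> \<bar>sinc y\<bar> \<le> 1 / \<bar>y\<bar>"
  using abs_sin_le_one[of y] by (auto simp: abs_divide divide_right_mono)

definition Si_sup :: real where
  "Si_sup = (SUP t. \<bar>Si t\<bar>)"

lemma abs_Si_le: "\<bar>Si t\<bar> \<le> Si_sup"
proof -
  obtain B where "\<And>t. \<bar>Si t\<bar> \<le> B"
    using bounded_Si by blast
  then show ?thesis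
    unfolding Si_sup_def by (intro cSUP_upper bdd_aboveI2) auto
qed

lemma tendsto_Si_scaled_at_top: "((\<lambda>T. Si (T * y)) \<longlongrightarrow> pi / 2 * sgn y) at_top"
proof -
  have pos: "((\<lambda>T. Si (T * y)) \<longlongrightarrow> pi / 2) at_top" if "y > 0" for y
  proof -
    have "filterlim (\<lambda>T. T * y) at_top at_top"
      using that by (intro filterlim_at_top_mult_tendsto_pos[OF tendsto_const] filterlim_ident)
    then show ?thesis
      by (rule filterlim_compose[OF Si_at_top])
  qed
  consider "y > 0" | "y = 0" | "y < 0"
    by linarith
  then show ?thesis
  proof cases
    case 3
    have "((\<lambda>T. - Si (T * - y)) \<longlongrightarrow> - (pi / 2)) at_top"
      using 3 by (intro tendsto_minus pos) simp
    moreover have "\<forall>\<^sub>F T in at_top. - Si (T * - y) = Si (T * y)"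
      using eventually_ge_at_top[of 0]
    proof eventually_elim
      case (elim T)
      then have "0 \<le> T * - y"
        using 3 by (simp add: mult_nonneg_nonpos)
      from Si_neg[OF this] show ?case
        by simp
    qed
    ultimately show ?thesis
      using 3 by (simp add: tendsto_cong)
  next
    case 1
    then show ?thesis
      using pos[OF 1] by simp
  next
    case 2
    then show ?thesis
      by (simp add: Si_def zero_ereal_def)
  qed
qed

lemma integral_exp_imag_interval:
  assumes "T \<ge> 0"
  shows "(\<integral>t. indicator {-T..T} t *\<^sub>R exp (- (\<i> * complex_of_real (t * v))) \<partial>lborel)
    = complex_of_real (2 * T * sinc (T * v))"
proof (cases "v = 0")
  case True
  then show ?thesis
    using assms by (simp add: scaleR_conv_of_real)
next
  case False
  define F where "F t = exp (- (\<i> * complex_of_real (t * v))) / (- \<i> * complex_of_real v)" for t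
  have "(LBINT t=ereal (-T)..ereal T. exp (- (\<i> * complex_of_real (t * v)))) = F T - F (-T)"
  proof (rule interval_integral_FTC_finite)
    show "continuous_on {min (-T) T..max (-T) T} (\<lambda>t. exp (- (\<i> * complex_of_real (t * v))))"
      by (intro continuous_intros)
    show "(F has_vector_derivative exp (- (\<i> * complex_of_real (t * v)))) (at t within {min (- T) T..max (- T) T})" for t
      unfolding F_def using False
      by (auto intro!: derivative_eq_intros has_vector_derivative_real_field simp: field_simps)
  qed
  also have "F T - F (-T) = (exp (- (\<i> * complex_of_real (T * v))) - exp (\<i> * complex_of_real (T * v)))
      / (- \<i> * complex_of_real v)"
    by (simp add: F_def diff_divide_distrib)
  also have "exp (- (\<i> * complex_of_real (T * v))) - exp (\<i> * complex_of_real (T * v))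
      = - 2 * \<i> * complex_of_real (sin (T * v))"
    by (simp add: exp_minus_Euler exp_Euler algebra_simps sin_of_real[symmetric] del: sin_of_real)
  finally have "(LBINT t=ereal (-T)..ereal T. exp (- (\<i> * complex_of_real (t * v))))
      = complex_of_real (2 * T * sinc (T * v))"
    using False assms by (cases "T = 0") (auto simp: field_simps)
  then show ?thesis
    using assms by (simp add: interval_integral_Icc set_lebesgue_integral_def)
qed

lemma integral_Ici_FTC:
  fixes F f :: "real \<Rightarrow> real"
  assumes deriv: "\<And>u. c < u \<Longrightarrow> (F has_real_derivative f u) (at u)"
    and cont: "\<And>u. c < u \<Longrightarrow> isCont f u"
    and integrable: "integrable lborel (\<lambda>u. indicator {c..} u * f u)"
    and lim_c: "(F \<longlongrightarrow> A) (at_right c)"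
    and lim_top: "(F \<longlongrightarrow> 0) at_top"
  shows "(\<integral>u. indicator {c..} u * f u \<partial>lborel) = - A"
proof -
  have f_on_Ici: "set_integrable lborel {c..} f"
    using integrable by (simp add: set_integrable_def)
  have f_on_Ioi: "set_integrable lborel {c<..} f"
    using f_on_Ici by (rule set_integrable_subset) auto
  have "(LBINT u=ereal c..\<infinity>. f u) = 0 - A"
  proof (rule interval_integral_FTC_integrable)
    show "set_integrable lborel (einterval (ereal c) \<infinity>) f"
      using f_on_Ioi by simp
    show "((F \<circ> real_of_ereal) \<longlongrightarrow> A) (at_right (ereal c))"
      using lim_c by (simp add: ereal_tendsto_simps)
    show "((F \<circ> real_of_ereal) \<longlongrightarrow> 0) (at_left \<infinity>)"
      using lim_top by (simp add: ereal_tendsto_simps)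
  qed (auto intro: deriv cont simp: has_real_derivative_iff_has_vector_derivative[symmetric])
  also have "(LBINT u=ereal c..\<infinity>. f u) = (LBINT u:{c<..}. f u)"
    by (rule interval_integral_to_infinity_eq)
  also have "\<dots> = (LBINT u:{c..}. f u)"
  proof (rule set_integral_cong_set)
    show "set_borel_measurable lborel {c<..} f" "set_borel_measurable lborel {c..} f"
      using f_on_Ici f_on_Ioi by (auto simp: set_borel_measurable_def set_integrable_def)
    show "AE x in lborel. (x \<in> {c..}) = (x \<in> {c<..})"
      using AE_lborel_singleton[of c] by eventually_elim auto
  qed
  finally show ?thesis
    by (simp add: set_lebesgue_integral_def mult.commute)
qed

lemma integrable_lborel_product:
  fixes h1 h2 :: "real \<Rightarrow> real"
  assumes "integrable lborel h1" and "integrable lborel h2"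
  shows "integrable (lborel \<Otimes>\<^sub>M lborel) (\<lambda>z. h1 (fst z) * h2 (snd z))"
proof (rule lborel_pair.Fubini_integrable)
  show "(\<lambda>z. h1 (fst z) * h2 (snd z)) \<in> borel_measurable (lborel \<Otimes>\<^sub>M lborel)"
    using assms by measurable
  have "integrable lborel (\<lambda>x. \<bar>h1 x\<bar> * (\<integral>y. \<bar>h2 y\<bar> \<partial>lborel))"
    using assms by simp
  then show "integrable lborel (\<lambda>x. \<integral>y. norm (h1 (fst (x, y)) * h2 (snd (x, y))) \<partial>lborel)"
    by (simp add: abs_mult)
qed (use assms in simp)

section \<open>Parametric integrals and Lebesgue differentiation\<close>

lemma integral_dominated_convergence_at:
  fixes s :: "'c::first_countable_topology \<Rightarrow> 'a \<Rightarrow> 'b::{banach, second_countable_topology}"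
  assumes "f \<in> borel_measurable M" "integrable M w"
    and lim: "AE x in M. ((\<lambda>t. s t x) \<longlongrightarrow> f x) (at p)"
    and bound: "\<forall>\<^sub>F t in at p. s t \<in> borel_measurable M \<and> (AE x in M. norm (s t x) \<le> w x)"
  shows "((\<lambda>t. integral\<^sup>L M (s t)) \<longlongrightarrow> integral\<^sup>L M f) (at p)"
  unfolding tendsto_at_iff_sequentially comp_def
proof (intro allI impI)
  fix X :: "nat \<Rightarrow> 'c"
  assume "\<forall>i. X i \<in> UNIV - {p}" and "X \<longlonglongrightarrow> p"
  then have X: "filterlim X (at p) sequentially"
    by (intro filterlim_atI) auto
  from filterlim_iff[THEN iffD1, OF X, rule_format, OF bound]
  obtain N where N: "\<And>n. N \<le> n \<Longrightarrow> s (X n) \<in> borel_measurable M \<and> (AE x in M. norm (s (X n) x) \<le> w x)"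
    by (auto simp: eventually_sequentially)
  show "(\<lambda>n. integral\<^sup>L M (s (X n))) \<longlonglongrightarrow> integral\<^sup>L M f"
  proof (rule LIMSEQ_offset, rule integral_dominated_convergence)
    show "AE x in M. (\<lambda>n. s (X (n + N)) x) \<longlonglongrightarrow> f x"
      using lim by eventually_elim (intro LIMSEQ_ignore_initial_segment filterlim_compose[OF _ X])
    show "AE x in M. norm (s (X (n + N)) x) \<le> w x" "s (X (n + N)) \<in> borel_measurable M" for n
      using N[of "n + N"] by auto
  qed (use assms in auto)
qed

lemma norm_difference_quotient_le:
  fixes g g' :: "'a::real_normed_field \<Rightarrow> 'a"
  assumes deriv: "\<And>z. z \<in> ball p r \<Longrightarrow> (g has_field_derivative g' z) (at z)"
    and bound: "\<And>z. z \<in> ball p r \<Longrightarrow> norm (g' z) \<le> B"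
    and "q \<in> ball p r" "q \<noteq> p"
  shows "norm ((g q - g p) / (q - p)) \<le> B"
proof -
  have "0 < r"
    using \<open>q \<in> ball p r\<close> by (smt (verit) mem_ball zero_le_dist)
  have "norm (g q - g p) \<le> B * norm (q - p)"
  proof (rule field_differentiable_bound[OF convex_ball, where f=g and f'=g'])
    show "(g has_field_derivative g' z) (at z within ball p r)" if "z \<in> ball p r" for z
      using deriv[OF that] by (rule has_field_derivative_at_within)
  qed (use bound \<open>q \<in> ball p r\<close> \<open>0 < r\<close> in auto)
  then show ?thesis
    using \<open>q \<noteq> p\<close> by (simp add: norm_divide divide_le_eq)
qed

lemma has_field_derivative_integral:
  fixes g g' :: "'c::{real_normed_field, banach, second_countable_topology} \<Rightarrow> 'a \<Rightarrow> 'c"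
  assumes integrable: "\<And>q. q \<in> ball p r \<Longrightarrow> integrable M (g q)"
    and measurable': "g' p \<in> borel_measurable M"
    and deriv: "\<And>q y. q \<in> ball p r \<Longrightarrow> y \<in> space M \<Longrightarrow> ((\<lambda>q. g q y) has_field_derivative g' q y) (at q)"
    and dominating: "integrable M W"
    and bound: "\<And>q y. q \<in> ball p r \<Longrightarrow> y \<in> space M \<Longrightarrow> norm (g' q y) \<le> W y"
    and "r > 0"
  shows "((\<lambda>q. \<integral>y. g q y \<partial>M) has_field_derivative (\<integral>y. g' p y \<partial>M)) (at p)"
proof -
  have near_p: "\<forall>\<^sub>F q in at p. q \<in> ball p r \<and> q \<noteq> p"
    unfolding eventually_at using \<open>r > 0\<close> by (auto simp: dist_commute)
  have quotient_integral: "(\<integral>y. (g q y - g p y) / (q - p) \<partial>M)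
      = ((\<integral>y. g q y \<partial>M) - (\<integral>y. g p y \<partial>M)) / (q - p)" if "q \<in> ball p r" for q
  proof -
    have "(\<integral>y. (g q y - g p y) / (q - p) \<partial>M) = (\<integral>y. g q y - g p y \<partial>M) / (q - p)"
      by (rule integral_divide_zero)
    also have "(\<integral>y. g q y - g p y \<partial>M) = (\<integral>y. g q y \<partial>M) - (\<integral>y. g p y \<partial>M)"
      using that \<open>r > 0\<close> by (intro Bochner_Integration.integral_diff integrable) auto
    finally show ?thesis .
  qed
  have quotient_bound: "norm ((g q y - g p y) / (q - p)) \<le> W y"
    if "q \<in> ball p r" "q \<noteq> p" "y \<in> space M" for q y
    using that by (intro norm_difference_quotient_le[where g="\<lambda>q. g q y" and g'="\<lambda>q. g' q y"] deriv bound)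
  have "((\<lambda>q. \<integral>y. (g q y - g p y) / (q - p) \<partial>M) \<longlongrightarrow> (\<integral>y. g' p y \<partial>M)) (at p)"
  proof (rule integral_dominated_convergence_at[OF measurable' dominating])
    show "AE y in M. ((\<lambda>q. (g q y - g p y) / (q - p)) \<longlongrightarrow> g' p y) (at p)"
    proof (rule AE_I2)
      fix y assume "y \<in> space M"
      moreover have "p \<in> ball p r"
        using \<open>r > 0\<close> by simp
      ultimately show "((\<lambda>q. (g q y - g p y) / (q - p)) \<longlongrightarrow> g' p y) (at p)"
        using deriv by (simp add: has_field_derivative_iff)
    qed
    show "\<forall>\<^sub>F q in at p. (\<lambda>y. (g q y - g p y) / (q - p)) \<in> borel_measurable M
        \<and> (AE y in M. norm ((g q y - g p y) / (q - p)) \<le> W y)"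
      using near_p
    proof eventually_elim
      case (elim q)
      have "p \<in> ball p r"
        using \<open>r > 0\<close> by simp
      then have "(\<lambda>y. (g q y - g p y) / (q - p)) \<in> borel_measurable M"
        using integrable elim by (intro borel_measurable_divide borel_measurable_diff borel_measurable_const) auto
      then show ?case
        using quotient_bound elim by (auto intro: AE_I2)
    qed
  qed
  moreover have "\<forall>\<^sub>F q in at p. (\<integral>y. (g q y - g p y) / (q - p) \<partial>M)
      = ((\<integral>y. g q y \<partial>M) - (\<integral>y. g p y \<partial>M)) / (q - p)"
    using near_p by eventually_elim (rule quotient_integral, simp)
  ultimately show ?thesis
    unfolding has_field_derivative_iff by (rule Lim_transform_eventually)
qed

lemma tendsto_integral_average_at_right_AE:
  fixes f :: "real \<Rightarrow> real"
  assumes "\<And>a b. f integrable_on {a..b}"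
  obtains N where "negligible N"
    "\<And>x. x \<notin> N \<Longrightarrow> ((\<lambda>h. integral {x..x + h} f / h) \<longlongrightarrow> f x) (at_right 0)"
proof -
  obtain N where N: "negligible N"
    "\<And>x e. \<lbrakk>x \<notin> N; 0 < e\<rbrakk> \<Longrightarrow> \<exists>d>0. \<forall>h. 0 < h \<and> h < d \<longrightarrow>
       norm (integral (cbox x (x + h *\<^sub>R One)) f /\<^sub>R h ^ DIM(real) - f x) < e"
    using integrable_ccontinuous_explicit[of f] assms by auto
  show ?thesis
  proof (rule that[OF N(1)])
    fix x assume "x \<notin> N"
    show "((\<lambda>h. integral {x..x + h} f / h) \<longlongrightarrow> f x) (at_right 0)"
    proof (rule tendstoI)
      fix e :: real assume "0 < e"
      then show "\<forall>\<^sub>F h in at_right 0. dist (integral {x..x + h} f / h) (f x) < e"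
        using N(2)[OF \<open>x \<notin> N\<close> \<open>0 < e\<close>]
        by (simp add: eventually_at_right_field dist_real_def divide_inverse mult.commute) blast
    qed
  qed
qed

lemma tendsto_integral_average_at_left_AE:
  fixes f :: "real \<Rightarrow> real"
  assumes integrable: "\<And>a b. f integrable_on {a..b}"
  obtains N where "negligible N"
    "\<And>x. x \<notin> N \<Longrightarrow> ((\<lambda>h. integral {x - h..x} f / h) \<longlongrightarrow> f x) (at_right 0)"
proof -
  have "(\<lambda>t. f (- t)) integrable_on {a..b}" for a b
    using Henstock_Kurzweil_Integration.integrable_reflect_real[where f=f and a="-b" and b="-a"]
      integrable[of "-b" "-a"] by simp
  then obtain N where N: "negligible N"
      "\<And>x. x \<notin> N \<Longrightarrow> ((\<lambda>h. integral {x..x + h} (\<lambda>t. f (- t)) / h) \<longlongrightarrow> f (- x)) (at_right 0)"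
    using tendsto_integral_average_at_right_AE by blast
  show ?thesis
  proof (rule that[of "uminus ` N"])
    show "negligible (uminus ` N)"
      using N(1) by (auto intro: negligible_differentiable_image_negligible)
    fix x assume "x \<notin> uminus ` N"
    then have "- x \<notin> N"
      by (auto simp: image_iff)
    have "integral {- x..- x + h} (\<lambda>t. f (- t)) = integral {x - h..x} f" for h
      using Henstock_Kurzweil_Integration.integral_reflect_real[of x "x - h" f] by (simp add: add.commute)
    then show "((\<lambda>h. integral {x - h..x} f / h) \<longlongrightarrow> f x) (at_right 0)"
      using N(2)[OF \<open>- x \<notin> N\<close>] by simp
  qed
qed

lemma has_real_derivative_indefinite_integral_AE:
  fixes f F :: "real \<Rightarrow> real"
  assumes integrable: "\<And>a b. f integrable_on {a..b}"
    and antiderivative: "\<And>z y. z \<le> y \<Longrightarrow> F y - F z = integral {z..y} f"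
  obtains N where "negligible N" "\<And>x. x \<notin> N \<Longrightarrow> (F has_real_derivative f x) (at x)"
proof -
  obtain N1 where N1: "negligible N1"
      "\<And>x. x \<notin> N1 \<Longrightarrow> ((\<lambda>h. integral {x..x + h} f / h) \<longlongrightarrow> f x) (at_right 0)"
    using tendsto_integral_average_at_right_AE[OF integrable] by blast
  obtain N2 where N2: "negligible N2"
      "\<And>x. x \<notin> N2 \<Longrightarrow> ((\<lambda>h. integral {x - h..x} f / h) \<longlongrightarrow> f x) (at_right 0)"
    using tendsto_integral_average_at_left_AE[OF integrable] by blast
  show ?thesis
  proof (rule that[of "N1 \<union> N2"])
    show "negligible (N1 \<union> N2)"
      using N1(1) N2(1) by simp
    fix x assume "x \<notin> N1 \<union> N2"
    then have "x \<notin> N1" "x \<notin> N2"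
      by auto
    have right: "((\<lambda>h. (F (x + h) - F x) / h) \<longlongrightarrow> f x) (at_right 0)"
      using N1(2)[OF \<open>x \<notin> N1\<close>]
    proof (rule Lim_transform_eventually)
      show "\<forall>\<^sub>F h in at_right 0. integral {x..x + h} f / h = (F (x + h) - F x) / h"
        using eventually_at_right_less[of 0] by eventually_elim (simp add: antiderivative)
    qed
    have "((\<lambda>h. (F (x - h) - F x) / - h) \<longlongrightarrow> f x) (at_right 0)"
      using N2(2)[OF \<open>x \<notin> N2\<close>]
    proof (rule Lim_transform_eventually)
      show "\<forall>\<^sub>F h in at_right 0. integral {x - h..x} f / h = (F (x - h) - F x) / - h"
        using eventually_at_right_less[of 0] by eventually_elim (simp add: antiderivative field_simps)
    qed
    then have left: "((\<lambda>h. (F (x + h) - F x) / h) \<longlongrightarrow> f x) (at_left 0)"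
      by (simp add: filterlim_at_left_to_right)
    show "(F has_real_derivative f x) (at x)"
      unfolding DERIV_def using left right by (simp add: filterlim_at_split)
  qed
qed

section \<open>The complex Gaussian tail integral\<close>

definition gauss_tail_kernel :: "complex \<Rightarrow> real \<Rightarrow> real \<Rightarrow> complex" where
  "gauss_tail_kernel p a u = (if sqrt a \<le> u then exp (- p * (complex_of_real u)\<^sup>2 / 2) else 0)"

definition gauss_tail :: "complex \<Rightarrow> real \<Rightarrow> complex" where
  "gauss_tail p a = (\<integral>u. gauss_tail_kernel p a u \<partial>lborel)"

definition gauss_tail_deriv :: "complex \<Rightarrow> real \<Rightarrow> complex" where
  "gauss_tail_deriv p a = (\<integral>u. - (complex_of_real u)\<^sup>2 / 2 * gauss_tail_kernel p a u \<partial>lborel)"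

lemma borel_measurable_gauss_tail_kernel[measurable]:
  "gauss_tail_kernel p a \<in> borel_measurable borel"
  unfolding gauss_tail_kernel_def by measurable

lemma borel_measurable_gauss_tail[measurable (raw)]:
  assumes [measurable]: "P \<in> borel_measurable M" "A \<in> borel_measurable M"
  shows "(\<lambda>x. gauss_tail (P x) (A x)) \<in> borel_measurable M"
proof -
  have "(\<lambda>z::(complex \<times> real) \<times> real. gauss_tail_kernel (fst (fst z)) (snd (fst z)) (snd z))
      \<in> borel_measurable ((borel \<Otimes>\<^sub>M borel) \<Otimes>\<^sub>M lborel)"
    unfolding gauss_tail_kernel_def by measurable
  then have "(\<lambda>z::complex \<times> real. gauss_tail (fst z) (snd z)) \<in> borel_measurable (borel \<Otimes>\<^sub>M borel)"
    unfolding gauss_tail_def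
    by (intro lborel.borel_measurable_lebesgue_integral) (simp add: split_beta')
  from measurable_compose[OF _ this, of "\<lambda>x. (P x, A x)"] show ?thesis
    by simp
qed

lemma borel_measurable_gauss_tail_deriv[measurable (raw)]:
  assumes [measurable]: "P \<in> borel_measurable M" "A \<in> borel_measurable M"
  shows "(\<lambda>x. gauss_tail_deriv (P x) (A x)) \<in> borel_measurable M"
proof -
  have "(\<lambda>z::(complex \<times> real) \<times> real. - (complex_of_real (snd z))\<^sup>2 / 2
      * gauss_tail_kernel (fst (fst z)) (snd (fst z)) (snd z))
      \<in> borel_measurable ((borel \<Otimes>\<^sub>M borel) \<Otimes>\<^sub>M lborel)"
    unfolding gauss_tail_kernel_def by measurable
  then have "(\<lambda>z::complex \<times> real. gauss_tail_deriv (fst z) (snd z)) \<in> borel_measurable (borel \<Otimes>\<^sub>M borel)"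
    unfolding gauss_tail_deriv_def
    by (intro lborel.borel_measurable_lebesgue_integral) (simp add: split_beta')
  from measurable_compose[OF _ this, of "\<lambda>x. (P x, A x)"] show ?thesis
    by simp
qed

lemma borel_measurable_Complex_line[measurable]: "(\<lambda>t. Complex a t) \<in> borel_measurable borel"
  unfolding Complex_eq by measurable

lemma norm_gauss_tail_kernel_le:
  assumes "\<delta> \<le> Re p"
  shows "norm (gauss_tail_kernel p a u) \<le> exp (- (\<delta> / 2) * u\<^sup>2)"
proof -
  have "norm (exp (- p * (complex_of_real u)\<^sup>2 / 2)) = exp (- Re p * u\<^sup>2 / 2)"
    by (simp add: norm_exp_eq_Re)
  also have "\<dots> \<le> exp (- (\<delta> / 2) * u\<^sup>2)"
    using assms by (simp add: mult_right_mono)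
  finally show ?thesis
    by (simp add: gauss_tail_kernel_def)
qed

lemma integrable_gauss_tail_kernel_moment:
  assumes "0 < Re p"
  shows "integrable lborel (\<lambda>u. (complex_of_real u) ^ k * gauss_tail_kernel p a u)"
proof (rule Bochner_Integration.integrable_bound)
  show "integrable lborel (\<lambda>u. \<bar>u\<bar> ^ k * exp (- (Re p / 2) * u\<^sup>2))"
    using integrable_abs[OF integrable_gaussian_moment[of "Re p / 2" k]] assms
    by (simp add: abs_mult power_abs)
  show "AE u in lborel. norm ((complex_of_real u) ^ k * gauss_tail_kernel p a u)
      \<le> norm (\<bar>u\<bar> ^ k * exp (- (Re p / 2) * u\<^sup>2))"
    using norm_gauss_tail_kernel_le[of "Re p" p a]
    by (intro AE_I2) (simp add: norm_mult norm_power mult_left_mono)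
qed simp

lemma norm_gauss_tail_le:
  assumes "0 < \<delta>" "\<delta> \<le> Re p"
  shows "norm (gauss_tail p a) \<le> (\<integral>u. exp (- (\<delta> / 2) * u\<^sup>2) \<partial>lborel)"
  unfolding gauss_tail_def
proof (rule Bochner_Integration.integral_norm_bound_integral)
  show "integrable lborel (gauss_tail_kernel p a)"
    using integrable_gauss_tail_kernel_moment[of p 0 a] assms by simp
  show "integrable lborel (\<lambda>u. exp (- (\<delta> / 2) * u\<^sup>2))"
    using integrable_gaussian_moment[of "\<delta> / 2" 0] assms by simp
qed (use norm_gauss_tail_kernel_le assms in auto)

lemma norm_gauss_tail_deriv_le:
  assumes "0 < \<delta>" "\<delta> \<le> Re p"
  shows "norm (gauss_tail_deriv p a) \<le> (\<integral>u. u\<^sup>2 / 2 * exp (- (\<delta> / 2) * u\<^sup>2) \<partial>lborel)"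
  unfolding gauss_tail_deriv_def
proof (rule Bochner_Integration.integral_norm_bound_integral)
  show "integrable lborel (\<lambda>u. - (complex_of_real u)\<^sup>2 / 2 * gauss_tail_kernel p a u)"
    using integrable_gauss_tail_kernel_moment[of p 2 a] assms by simp
  show "integrable lborel (\<lambda>u. u\<^sup>2 / 2 * exp (- (\<delta> / 2) * u\<^sup>2))"
    using integrable_gaussian_moment[of "\<delta> / 2" 2] assms by simp
  show "norm (- (complex_of_real u)\<^sup>2 / 2 * gauss_tail_kernel p a u) \<le> u\<^sup>2 / 2 * exp (- (\<delta> / 2) * u\<^sup>2)"
    for u
    using norm_gauss_tail_kernel_le[OF assms(2), of a u]
    by (simp add: norm_mult norm_divide norm_power mult_left_mono)
qed

lemma Re_ge_in_cball:
  assumes "q \<in> cball p (Re p / 2)"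
  shows "Re p / 2 \<le> Re q"
proof -
  have "\<bar>Re (p - q)\<bar> \<le> cmod (p - q)"
    by (rule abs_Re_le_cmod)
  then show ?thesis
    using assms by (simp add: dist_norm)
qed

lemma has_field_derivative_gauss_tail:
  assumes "0 < Re p"
  shows "((\<lambda>p. gauss_tail p a) has_field_derivative gauss_tail_deriv p a) (at p)"
  unfolding gauss_tail_def gauss_tail_deriv_def
proof (rule has_field_derivative_integral[where r="Re p / 2"
      and W="\<lambda>u. u\<^sup>2 / 2 * exp (- (Re p / 4) * u\<^sup>2)"])
  show "integrable lborel (\<lambda>u. u\<^sup>2 / 2 * exp (- (Re p / 4) * u\<^sup>2))"
    using integrable_gaussian_moment[of "Re p / 4" 2] assms by simp
  fix q u assume "q \<in> ball p (Re p / 2)"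
  then have q: "Re p / 2 \<le> Re q"
    using Re_ge_in_cball by auto
  then show "integrable lborel (gauss_tail_kernel q a)"
    using integrable_gauss_tail_kernel_moment[of q 0 a] assms by simp
  show "((\<lambda>q. gauss_tail_kernel q a u) has_field_derivative
      - (complex_of_real u)\<^sup>2 / 2 * gauss_tail_kernel q a u) (at q)"
    unfolding gauss_tail_kernel_def by (auto intro!: derivative_eq_intros simp: field_simps)
  show "norm (- (complex_of_real u)\<^sup>2 / 2 * gauss_tail_kernel q a u) \<le> u\<^sup>2 / 2 * exp (- (Re p / 4) * u\<^sup>2)"
    using norm_gauss_tail_kernel_le[of "Re p / 2" q a u] q
    by (simp add: norm_mult norm_divide norm_power mult_left_mono)
qed (use assms in simp_all)

lemma gauss_tail_of_real:
  assumes "p > 0"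
  shows "gauss_tail (complex_of_real p) a = complex_of_real (sqrt (2 * pi) * gaussQ (sqrt (p * a)) / sqrt p)"
proof -
  define I where "I = (\<integral>u. indicator {sqrt a..} u * exp (- p * u\<^sup>2 / 2) \<partial>lborel)"
  have "gauss_tail (complex_of_real p) a = (\<integral>u. complex_of_real (indicator {sqrt a..} u * exp (- p * u\<^sup>2 / 2)) \<partial>lborel)"
    unfolding gauss_tail_def gauss_tail_kernel_def
    by (intro Bochner_Integration.integral_cong) (auto simp: exp_of_real[symmetric])
  also have "\<dots> = complex_of_real I"
    unfolding I_def by (rule integral_complex_of_real)
  finally have gauss_tail_eq: "gauss_tail (complex_of_real p) a = complex_of_real I" .
  have "sqrt (2 * pi) * gaussQ (sqrt (p * a))
      = (\<integral>t. indicator {sqrt (p * a)..} t * exp (- (t\<^sup>2) / 2) \<partial>lborel)"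
    unfolding gaussQ_def set_lebesgue_integral_def by simp
  also have "\<dots> = sqrt p * (\<integral>u. indicator {sqrt (p * a)..} (0 + sqrt p * u)
      * exp (- ((0 + sqrt p * u)\<^sup>2) / 2) \<partial>lborel)"
    using assms by (subst lborel_integral_real_affine[where c="sqrt p" and t=0]) simp_all
  also have "(\<integral>u. indicator {sqrt (p * a)..} (0 + sqrt p * u) * exp (- ((0 + sqrt p * u)\<^sup>2) / 2) \<partial>lborel) = I"
    unfolding I_def
    using assms by (intro Bochner_Integration.integral_cong) (auto simp: indicator_def real_sqrt_mult power_mult_distrib)
  finally show ?thesis
    using assms gauss_tail_eq by (simp add: field_simps)
qed

section \<open>Analytic continuation of the Q-transform\<close>

context nonneg_density_rv
begin

definition gauss_tail_transform :: "complex \<Rightarrow> complex" where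
  "gauss_tail_transform p = (\<integral>\<omega>. gauss_tail p (X \<omega>) \<partial>M)"

lemma integrable_gauss_tail_X:
  assumes "0 < Re p"
  shows "integrable M (\<lambda>\<omega>. gauss_tail p (X \<omega>))"
  using assms norm_gauss_tail_le[of "Re p" p]
  by (intro integrable_const_bound[where B="\<integral>u. exp (- (Re p / 2) * u\<^sup>2) \<partial>lborel"]) auto

lemma gauss_tail_transform_of_real:
  assumes "p > 0"
  shows "gauss_tail_transform (complex_of_real p)
    = complex_of_real (sqrt (2 * pi) / sqrt p * gaussQ_transform M X p)"
proof -
  have "gauss_tail_transform (complex_of_real p)
      = (\<integral>\<omega>. complex_of_real (sqrt (2 * pi) / sqrt p * gaussQ (sqrt (p * X \<omega>))) \<partial>M)"
    unfolding gauss_tail_transform_def using assms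
    by (intro Bochner_Integration.integral_cong) (simp_all add: gauss_tail_of_real)
  also have "\<dots> = complex_of_real (sqrt (2 * pi) / sqrt p * gaussQ_transform M X p)"
    unfolding gaussQ_transform_def by simp
  finally show ?thesis .
qed

lemma holomorphic_gauss_tail_transform: "gauss_tail_transform holomorphic_on {p. 0 < Re p}"
proof -
  have "(gauss_tail_transform has_field_derivative (\<integral>\<omega>. gauss_tail_deriv p (X \<omega>) \<partial>M)) (at p)"
    if "0 < Re p" for p
    unfolding gauss_tail_transform_def
  proof (rule has_field_derivative_integral[where r="Re p / 2"
        and W="\<lambda>_. \<integral>u. u\<^sup>2 / 2 * exp (- (Re p / 4) * u\<^sup>2) \<partial>lborel"])
    fix q \<omega> assume "q \<in> ball p (Re p / 2)"
    then have "Re p / 2 \<le> Re q"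
      using Re_ge_in_cball by auto
    then have q: "0 < Re q"
      using that by simp
    then show "integrable M (\<lambda>\<omega>. gauss_tail q (X \<omega>))"
      "((\<lambda>q. gauss_tail q (X \<omega>)) has_field_derivative gauss_tail_deriv q (X \<omega>)) (at q)"
      by (auto intro!: integrable_gauss_tail_X has_field_derivative_gauss_tail)
    show "norm (gauss_tail_deriv q (X \<omega>)) \<le> (\<integral>u. u\<^sup>2 / 2 * exp (- (Re p / 4) * u\<^sup>2) \<partial>lborel)"
      using norm_gauss_tail_deriv_le[of "Re p / 2" q "X \<omega>"] that \<open>Re p / 2 \<le> Re q\<close> by simp
  qed (use that in simp_all)
  then show ?thesis
    unfolding holomorphic_on_def field_differentiable_def
    by (blast intro: has_field_derivative_at_within)
qed

lemma holomorphic_extension_eq: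
  assumes holo: "\<Phi> holomorphic_on {p. 0 < Re p}"
    and agree: "\<forall>p>0. \<Phi> (complex_of_real p) = complex_of_real (gaussQ_transform M X p)"
    and "0 < Re p"
  shows "\<Phi> p = csqrt p * gauss_tail_transform p / complex_of_real (sqrt (2 * pi))"
proof -
  define S where "S = {p. 0 < Re p}"
  define \<Delta> where "\<Delta> p = \<Phi> p - csqrt p * gauss_tail_transform p / complex_of_real (sqrt (2 * pi))" for p
  have "\<Delta> p = 0"
  proof (rule analytic_continuation[where f=\<Delta> and S=S and U="complex_of_real ` {0<..}" and \<xi>=1])
    have "S \<subseteq> - \<real>\<^sub>\<le>\<^sub>0"
      by (auto simp: S_def complex_nonpos_Reals_iff)
    then show "\<Delta> holomorphic_on S"
      unfolding \<Delta>_def S_def using holo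
      by (intro holomorphic_intros holomorphic_gauss_tail_transform
          holomorphic_on_subset[OF holomorphic_on_csqrt]) (auto simp: S_def)
    show "open S" "connected S"
      unfolding S_def by (simp_all add: open_halfspace_Re_gt convex_connected convex_halfspace_Re_gt)
    show "complex_of_real ` {0<..} \<subseteq> S" "1 \<in> S" "p \<in> S"
      using \<open>0 < Re p\<close> by (auto simp: S_def)
    show "1 islimpt complex_of_real ` {0<..}"
      unfolding islimpt_approachable
    proof (intro allI impI)
      fix e :: real assume "e > 0"
      then show "\<exists>z\<in>complex_of_real ` {0<..}. z \<noteq> 1 \<and> dist z 1 < e"
        by (intro bexI[of _ "complex_of_real (1 + e / 2)"]) (auto simp: dist_norm complex_eq_iff)
    qed
    show "\<Delta> z = 0" if "z \<in> complex_of_real ` {0<..}" for z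
      using that agree
      by (auto simp: \<Delta>_def gauss_tail_transform_of_real csqrt_of_real field_simps)
  qed
  then show ?thesis
    by (simp add: \<Delta>_def)
qed

end

section \<open>The distribution function\<close>

context nonneg_density_rv
begin

definition strict_cdf :: "real \<Rightarrow> real" where
  "strict_cdf y = (\<integral>\<omega>. indicator {..<y} (X \<omega>) \<partial>M)"

lemma integrable_density: "integrable lborel f"
  using distributed_integrable[OF X_distributed, of "\<lambda>_. 1"] f_nonneg by simp

lemma integrable_density_indicator: "A \<in> sets borel \<Longrightarrow> integrable lborel (\<lambda>t. f t * indicator A t)"
  using integrable_real_mult_indicator[OF _ integrable_density] by simp

lemma density_integrable_on: "f integrable_on {a..b}"
  using integrable_density_indicator[of "{a..b}"]
  by (intro set_borel_integral_eq_integral(1)) (simp add: set_integrable_def mult.commute)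

lemma strict_cdf_diff:
  assumes "z \<le> y"
  shows "strict_cdf y - strict_cdf z = integral {z..y} f"
proof -
  have strict_cdf_eq: "strict_cdf y = (\<integral>t. f t * indicator {..<y} t \<partial>lborel)" for y
    unfolding strict_cdf_def using f_nonneg
    by (intro distributed_integral[OF X_distributed, symmetric]) auto
  have "strict_cdf y - strict_cdf z
      = (\<integral>t. f t * indicator {..<y} t - f t * indicator {..<z} t \<partial>lborel)"
    unfolding strict_cdf_eq
    by (intro Bochner_Integration.integral_diff[symmetric] integrable_density_indicator) auto
  also have "\<dots> = (LBINT t:{z..y}. f t)"
    unfolding set_lebesgue_integral_def using AE_lborel_singleton[of y] assms
    by (intro integral_cong_AE) (auto simp: indicator_def elim!: eventually_mono)
  also have "\<dots> = integral {z..y} f"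
    using integrable_density_indicator[of "{z..y}"]
    by (intro set_borel_integral_eq_integral(2)) (simp add: set_integrable_def mult.commute)
  finally show ?thesis .
qed

lemma AE_has_real_derivative_strict_cdf: "AE x in lborel. (strict_cdf has_real_derivative f x) (at x)"
proof -
  obtain N where "negligible N" and deriv: "\<And>x. x \<notin> N \<Longrightarrow> (strict_cdf has_real_derivative f x) (at x)"
    using has_real_derivative_indefinite_integral_AE[OF density_integrable_on strict_cdf_diff] by blast
  then have "AE x in lebesgue. x \<notin> N"
    by (intro AE_not_in) (simp add: negligible_iff_null_sets)
  then show ?thesis
    by (simp add: AE_completion_iff) (auto elim: eventually_mono intro: deriv)
qed

end

section \<open>A Dirichlet-type kernel\<close>

locale bromwich_kernel =
  fixes x \<epsilon> :: real
  assumes x_pos: "0 < x" and \<epsilon>_pos: "0 < \<epsilon>"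
begin

definition phase :: "real \<Rightarrow> real" where
  "phase u = (u\<^sup>2 - x) / 2"

definition weight :: "real \<Rightarrow> real" where
  "weight u = exp (- \<epsilon> * phase u)"

definition weight_max :: real where
  "weight_max = exp (\<epsilon> * x / 2)"

definition kernel :: "real \<Rightarrow> real \<Rightarrow> real" where
  "kernel T u = weight u * (2 * T * sinc (T * phase u))"

definition kernel_tail :: "real \<Rightarrow> real \<Rightarrow> real" where
  "kernel_tail T a = (\<integral>u. indicator {sqrt a..} u * kernel T u \<partial>lborel)"

text \<open>Since \<open>d/du Si (T * phase u) = T u sinc (T * phase u)\<close>, the kernel is
  \<open>ibp_factor u * d/du Si (T * phase u)\<close>; integrating by parts against the bounded function
  \<open>Si (T * phase u)\<close> gives bounds uniform in \<open>T\<close>.\<close>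

definition ibp_factor :: "real \<Rightarrow> real" where
  "ibp_factor u = 2 * weight u / u"

definition ibp_factor' :: "real \<Rightarrow> real" where
  "ibp_factor' u = - 2 * weight u * (\<epsilon> + 1 / u\<^sup>2)"

definition Si_phase :: "real \<Rightarrow> real \<Rightarrow> real" where
  "Si_phase T u = Si (T * phase u)"

lemma weight_eq: "weight u = weight_max * exp (- (\<epsilon> / 2) * u\<^sup>2)"
proof -
  have "- \<epsilon> * phase u = \<epsilon> * x / 2 + - (\<epsilon> / 2) * u\<^sup>2"
    unfolding phase_def by (simp add: field_simps)
  then show ?thesis
    unfolding weight_def weight_max_def by (simp only: exp_add)
qed

lemma weight_pos: "0 < weight u"
  by (simp add: weight_def)

lemma weight_le_max: "weight u \<le> weight_max"
  unfolding weight_eq using \<epsilon>_pos by (intro mult_left_le) (auto simp: weight_max_def)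

lemma weight_max_pos: "0 < weight_max"
  by (simp add: weight_max_def)

lemma integrable_weight: "integrable lborel weight"
  unfolding weight_eq using integrable_gaussian_moment[of "\<epsilon> / 2" 0] \<epsilon>_pos by simp

lemma borel_measurable_weight[measurable]: "weight \<in> borel_measurable borel"
  unfolding weight_def phase_def by measurable

lemma borel_measurable_kernel[measurable]: "kernel T \<in> borel_measurable borel"
  unfolding kernel_def phase_def by measurable

lemma borel_measurable_ibp_factor'[measurable]: "ibp_factor' \<in> borel_measurable borel"
  unfolding ibp_factor'_def by measurable

lemma borel_measurable_Si_phase[measurable]: "Si_phase T \<in> borel_measurable borel"
  unfolding Si_phase_def phase_def by measurable

lemma abs_Si_phase_le: "\<bar>Si_phase T u\<bar> \<le> Si_sup"
  unfolding Si_phase_def by (rule abs_Si_le)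

lemma abs_kernel_le: "0 \<le> T \<Longrightarrow> \<bar>kernel T u\<bar> \<le> 2 * T * weight u"
  using abs_sinc_le_1[of "T * phase u"] weight_pos[of u]
  by (simp add: kernel_def abs_mult mult_left_le)

lemma integrable_indicator_kernel:
  assumes "0 \<le> T" "A \<in> sets borel"
  shows "integrable lborel (\<lambda>u. indicator A u * kernel T u)"
proof (rule Bochner_Integration.integrable_bound)
  show "integrable lborel (\<lambda>u. 2 * T * weight u)"
    using integrable_weight by simp
  show "AE u in lborel. norm (indicator A u * kernel T u) \<le> norm (2 * T * weight u)"
    using abs_kernel_le[OF assms(1)] weight_pos assms(1)
    by (intro AE_I2) (auto simp: indicator_def abs_mult abs_of_pos[OF weight_pos] less_imp_le)
qed (use assms in simp)

lemma isCont_phase: "isCont phase u"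
  unfolding phase_def by (intro continuous_intros) simp

lemma isCont_weight: "isCont weight u"
  unfolding weight_def by (intro continuous_intros isCont_phase)

lemma isCont_kernel: "isCont (kernel T) u"
  unfolding kernel_def using isCont_sinc
  by (intro continuous_intros isCont_weight isCont_o2[where f="\<lambda>u. T * phase u" and g=sinc] isCont_phase) auto

lemma has_real_derivative_ibp_factor:
  assumes "0 < u"
  shows "(ibp_factor has_real_derivative ibp_factor' u) (at u)"
proof -
  have "(weight has_real_derivative - \<epsilon> * u * weight u) (at u)"
    unfolding weight_def phase_def by (auto intro!: derivative_eq_intros simp: field_simps)
  then show ?thesis
    using assms unfolding ibp_factor_def
    by (auto intro!: derivative_eq_intros simp: ibp_factor'_def field_simps power2_eq_square)
qed

lemma has_real_derivative_Si_phase: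
  "(Si_phase T has_real_derivative sinc (T * phase u) * (T * u)) (at u)"
  unfolding Si_phase_def phase_def
  by (rule DERIV_chain2[OF DERIV_Si]) (auto intro!: derivative_eq_intros)

lemma isCont_ibp_factor: "0 < u \<Longrightarrow> isCont ibp_factor u"
  using has_real_derivative_ibp_factor DERIV_isCont by blast

lemma isCont_ibp_factor': "0 < u \<Longrightarrow> isCont ibp_factor' u"
  unfolding ibp_factor'_def by (intro continuous_intros isCont_weight) auto

lemma isCont_Si_phase: "isCont (Si_phase T) u"
  using has_real_derivative_Si_phase DERIV_isCont by blast

lemma ibp_factor_pos: "0 < u \<Longrightarrow> 0 < ibp_factor u"
  using weight_pos by (simp add: ibp_factor_def)

lemma ibp_factor_le: "0 < u \<Longrightarrow> ibp_factor u \<le> 2 * weight_max / u"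
  using weight_le_max[of u] by (simp add: ibp_factor_def divide_right_mono)

lemma abs_ibp_factor'_le:
  assumes "0 < c" "c \<le> u"
  shows "\<bar>ibp_factor' u\<bar> \<le> 2 * (\<epsilon> + 1 / c\<^sup>2) * weight u"
proof -
  have "1 / u\<^sup>2 \<le> 1 / c\<^sup>2"
    using assms by (intro divide_left_mono power_mono) auto
  then show ?thesis
    using weight_pos[of u] \<epsilon>_pos by (simp add: ibp_factor'_def abs_mult mult_right_mono)
qed

lemma tendsto_ibp_factor_at_top: "(ibp_factor \<longlongrightarrow> 0) at_top"
proof (rule Lim_null_comparison)
  show "\<forall>\<^sub>F u in at_top. norm (ibp_factor u) \<le> 2 * weight_max / u"
    using eventually_gt_at_top[of 0]
    by eventually_elim (use ibp_factor_pos ibp_factor_le in force)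
  show "((\<lambda>u. 2 * weight_max / u) \<longlongrightarrow> 0) at_top"
    by (intro tendsto_divide_0[OF tendsto_const] filterlim_at_top_imp_at_infinity[OF filterlim_ident])
qed

lemma ibp_factor'_bounded_le:
  assumes "0 < c" "\<And>u. \<bar>g u\<bar> \<le> B"
  shows "\<bar>indicator {c..} u * (ibp_factor' u * g u)\<bar> \<le> B * (2 * (\<epsilon> + 1 / c\<^sup>2) * weight u)"
proof (cases "c \<le> u")
  case True
  have "\<bar>ibp_factor' u\<bar> * \<bar>g u\<bar> \<le> 2 * (\<epsilon> + 1 / c\<^sup>2) * weight u * B"
    using abs_ibp_factor'_le[OF assms(1) True] assms(2)[of u] by (intro mult_mono) auto
  then show ?thesis
    using True by (simp add: abs_mult mult_ac)
next
  case False
  have "0 \<le> B"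
    using assms(2)[of 0] by simp
  then show ?thesis
    using False weight_pos[of u] \<epsilon>_pos by simp
qed

lemma integrable_ibp_factor'_bounded:
  assumes "0 < c" "g \<in> borel_measurable borel" "\<And>u. \<bar>g u\<bar> \<le> B"
  shows "integrable lborel (\<lambda>u. indicator {c..} u * (ibp_factor' u * g u))"
proof (rule Bochner_Integration.integrable_bound)
  show "integrable lborel (\<lambda>u. B * (2 * (\<epsilon> + 1 / c\<^sup>2) * weight u))"
    using integrable_weight by simp
  show "AE u in lborel. norm (indicator {c..} u * (ibp_factor' u * g u))
      \<le> norm (B * (2 * (\<epsilon> + 1 / c\<^sup>2) * weight u))"
  proof (rule AE_I2)
    fix u
    have "\<bar>indicator {c..} u * (ibp_factor' u * g u)\<bar> \<le> B * (2 * (\<epsilon> + 1 / c\<^sup>2) * weight u)"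
      using assms(1,3) by (rule ibp_factor'_bounded_le)
    then show "norm (indicator {c..} u * (ibp_factor' u * g u)) \<le> norm (B * (2 * (\<epsilon> + 1 / c\<^sup>2) * weight u))"
      by (smt (verit) real_norm_def)
  qed
qed (use assms in simp)

lemma integral_ibp_factor':
  assumes "0 < c"
  shows "(\<integral>u. indicator {c..} u * ibp_factor' u \<partial>lborel) = - ibp_factor c"
proof (rule integral_Ici_FTC[where F=ibp_factor])
  show "integrable lborel (\<lambda>u. indicator {c..} u * ibp_factor' u)"
    using integrable_ibp_factor'_bounded[OF assms, of "\<lambda>_. 1" 1] by simp
  show "(ibp_factor \<longlongrightarrow> ibp_factor c) (at_right c)"
    using isCont_ibp_factor[OF assms] by (simp add: isCont_def filterlim_at_split)
qed (use assms in \<open>auto intro: has_real_derivative_ibp_factor isCont_ibp_factor' tendsto_ibp_factor_at_top\<close>)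

lemma has_real_derivative_ibp_product:
  assumes "0 < u"
  shows "((\<lambda>u. ibp_factor u * Si_phase T u) has_real_derivative
    ibp_factor' u * Si_phase T u + kernel T u) (at u)"
proof -
  have "ibp_factor u * (sinc (T * phase u) * (T * u)) = kernel T u"
    using assms by (simp add: ibp_factor_def kernel_def field_simps)
  then show ?thesis
    using DERIV_mult[OF has_real_derivative_ibp_factor[OF assms] has_real_derivative_Si_phase[of T u]]
    by (simp add: algebra_simps)
qed

lemma tendsto_ibp_product_at_top: "((\<lambda>u. ibp_factor u * Si_phase T u) \<longlongrightarrow> 0) at_top"
proof (rule Lim_null_comparison)
  show "\<forall>\<^sub>F u in at_top. norm (ibp_factor u * Si_phase T u) \<le> norm (ibp_factor u) * Si_sup"
    using abs_Si_phase_le by (intro always_eventually allI) (simp add: abs_mult mult_left_mono)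
  show "((\<lambda>u. norm (ibp_factor u) * Si_sup) \<longlongrightarrow> 0) at_top"
    using tendsto_mult_left_zero[OF tendsto_norm_zero[OF tendsto_ibp_factor_at_top]] .
qed

lemma integral_kernel_by_parts:
  assumes "0 < c" "0 \<le> T"
  shows "(\<integral>u. indicator {c..} u * kernel T u \<partial>lborel)
    = - ibp_factor c * Si_phase T c - (\<integral>u. indicator {c..} u * (ibp_factor' u * Si_phase T u) \<partial>lborel)"
proof -
  have int_Si: "integrable lborel (\<lambda>u. indicator {c..} u * (ibp_factor' u * Si_phase T u))"
    using assms(1) abs_Si_phase_le by (intro integrable_ibp_factor'_bounded) auto
  have int_kernel: "integrable lborel (\<lambda>u. indicator {c..} u * kernel T u)"
    using assms(2) by (intro integrable_indicator_kernel) auto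
  have "(\<integral>u. indicator {c..} u * (ibp_factor' u * Si_phase T u + kernel T u) \<partial>lborel)
      = - (ibp_factor c * Si_phase T c)"
  proof (rule integral_Ici_FTC[where F="\<lambda>u. ibp_factor u * Si_phase T u"])
    show "integrable lborel (\<lambda>u. indicator {c..} u * (ibp_factor' u * Si_phase T u + kernel T u))"
      using Bochner_Integration.integrable_add[OF int_Si int_kernel] by (simp add: distrib_left)
    show "((\<lambda>u. ibp_factor u * Si_phase T u) \<longlongrightarrow> ibp_factor c * Si_phase T c) (at_right c)"
      using isCont_ibp_factor[OF assms(1)] isCont_Si_phase[where T=T and u=c]
      by (intro tendsto_intros) (auto simp: isCont_def filterlim_at_split)
  qed (use assms(1) in \<open>auto intro!: has_real_derivative_ibp_product continuous_intros
      isCont_ibp_factor' isCont_Si_phase isCont_kernel tendsto_ibp_product_at_top\<close>)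
  moreover have "(\<integral>u. indicator {c..} u * (ibp_factor' u * Si_phase T u + kernel T u) \<partial>lborel)
      = (\<integral>u. indicator {c..} u * (ibp_factor' u * Si_phase T u) \<partial>lborel)
        + (\<integral>u. indicator {c..} u * kernel T u \<partial>lborel)"
    using Bochner_Integration.integral_add[OF int_Si int_kernel] by (simp add: distrib_left)
  ultimately show ?thesis
    by simp
qed

lemma abs_integral_kernel_Ici_le:
  assumes "0 < c\<^sub>0" "c\<^sub>0 \<le> c" "0 \<le> T"
  shows "\<bar>\<integral>u. indicator {c..} u * kernel T u \<partial>lborel\<bar>
    \<le> Si_sup * (2 * weight_max / c\<^sub>0 + 2 * (\<epsilon> + 1 / c\<^sub>0\<^sup>2) * (\<integral>u. weight u \<partial>lborel))"
proof -
  have "0 < c"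
    using assms by simp
  have boundary: "\<bar>ibp_factor c * Si_phase T c\<bar> \<le> Si_sup * (2 * weight_max / c\<^sub>0)"
  proof -
    have "ibp_factor c \<le> 2 * weight_max / c\<^sub>0"
      using ibp_factor_le[OF \<open>0 < c\<close>] assms weight_max_pos
      by (smt (verit) divide_left_mono mult_pos_pos)
    then have "ibp_factor c * \<bar>Si_phase T c\<bar> \<le> 2 * weight_max / c\<^sub>0 * Si_sup"
      using ibp_factor_pos[OF \<open>0 < c\<close>] abs_Si_phase_le by (intro mult_mono) auto
    then show ?thesis
      using ibp_factor_pos[OF \<open>0 < c\<close>] by (simp add: abs_mult mult.commute)
  qed
  have "\<bar>\<integral>u. indicator {c..} u * (ibp_factor' u * Si_phase T u) \<partial>lborel\<bar>
      \<le> (\<integral>u. Si_sup * (2 * (\<epsilon> + 1 / c\<^sub>0\<^sup>2) * weight u) \<partial>lborel)"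
  proof (rule Bochner_Integration.integral_norm_bound_integral[where f="\<lambda>u. indicator {c..} u * (ibp_factor' u * Si_phase T u)", simplified])
    show "integrable lborel (\<lambda>u. indicator {c..} u * (ibp_factor' u * Si_phase T u))"
      using \<open>0 < c\<close> abs_Si_phase_le by (intro integrable_ibp_factor'_bounded) auto
    show "integrable lborel (\<lambda>u. Si_sup * (2 * (\<epsilon> + 1 / c\<^sub>0\<^sup>2) * weight u))"
      using integrable_weight by simp
    show "\<bar>indicator {c..} u * (ibp_factor' u * Si_phase T u)\<bar> \<le> Si_sup * (2 * (\<epsilon> + 1 / c\<^sub>0\<^sup>2) * weight u)"
      for u
      using ibp_factor'_bounded_le[where g="Si_phase T" and B=Si_sup and c=c\<^sub>0 and u=u]
        abs_Si_phase_le assms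
      by (cases "c \<le> u") (auto simp: indicator_def intro: order_trans)
  qed
  also have "\<dots> = Si_sup * (2 * (\<epsilon> + 1 / c\<^sub>0\<^sup>2) * (\<integral>u. weight u \<partial>lborel))"
    by simp
  finally have integral_part: "\<bar>\<integral>u. indicator {c..} u * (ibp_factor' u * Si_phase T u) \<partial>lborel\<bar>
      \<le> Si_sup * (2 * (\<epsilon> + 1 / c\<^sub>0\<^sup>2) * (\<integral>u. weight u \<partial>lborel))" .
  show ?thesis
    unfolding integral_kernel_by_parts[OF \<open>0 < c\<close> assms(3)] distrib_left
    using boundary integral_part by (simp add: abs_le_iff)
qed


lemma abs_kernel_le_near_zero:
  assumes "0 \<le> T" "0 \<le> u" "u \<le> sqrt (x / 2)"
  shows "\<bar>kernel T u\<bar> \<le> 8 * weight_max / x"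
proof (cases "T = 0")
  case True
  then show ?thesis
    using x_pos weight_max_pos by (simp add: kernel_def)
next
  case False
  have "u\<^sup>2 \<le> (sqrt (x / 2))\<^sup>2"
    using assms by (intro power_mono) auto
  then have phase_le: "phase u \<le> - x / 4"
    using x_pos by (simp add: phase_def)
  then have "T * phase u \<noteq> 0"
    using False x_pos by simp
  have "\<bar>kernel T u\<bar> = weight u * (2 * T) * \<bar>sinc (T * phase u)\<bar>"
    unfolding kernel_def using weight_pos[of u] assms(1) by (simp add: abs_mult)
  also have "\<dots> \<le> weight_max * (2 * T) * (1 / \<bar>T * phase u\<bar>)"
    using weight_le_max[of u] abs_sinc_le_inverse[OF \<open>T * phase u \<noteq> 0\<close>] weight_pos[of u] assms(1)
    by (intro mult_mono) auto
  also have "\<dots> = 2 * weight_max / \<bar>phase u\<bar>"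
    using False assms(1) by (simp add: abs_mult)
  also have "\<dots> \<le> 2 * weight_max / (x / 4)"
    using phase_le x_pos weight_max_pos by (intro divide_left_mono) (auto simp: mult_neg_pos)
  finally show ?thesis
    by simp
qed

lemma bounded_kernel_tail:
  obtains B where "\<And>T a. 0 \<le> T \<Longrightarrow> 0 \<le> a \<Longrightarrow> \<bar>kernel_tail T a\<bar> \<le> B"
proof
  define c\<^sub>0 where "c\<^sub>0 = sqrt (x / 2)"
  have "0 < c\<^sub>0"
    using x_pos by (simp add: c\<^sub>0_def)
  fix T a :: real assume "0 \<le> T" "0 \<le> a"
  define m where "m = max (sqrt a) c\<^sub>0"
  have "kernel_tail T a = (\<integral>u. indicator {sqrt a..<m} u * kernel T u + indicator {m..} u * kernel T u \<partial>lborel)"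
    unfolding kernel_tail_def m_def by (intro Bochner_Integration.integral_cong) (auto simp: indicator_def)
  also have "\<dots> = (\<integral>u. indicator {sqrt a..<m} u * kernel T u \<partial>lborel) + (\<integral>u. indicator {m..} u * kernel T u \<partial>lborel)"
    using \<open>0 \<le> T\<close> by (intro Bochner_Integration.integral_add integrable_indicator_kernel) auto
  finally have split: "kernel_tail T a = \<dots>" .
  have "\<bar>\<integral>u. indicator {sqrt a..<m} u * kernel T u \<partial>lborel\<bar>
      \<le> (\<integral>u. indicator {sqrt a..<m} u * (8 * weight_max / x) \<partial>lborel)"
  proof (rule Bochner_Integration.integral_norm_bound_integral[where f="\<lambda>u. indicator {sqrt a..<m} u * kernel T u", simplified])
    show "integrable lborel (\<lambda>u. indicator {sqrt a..<m} u * kernel T u)"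
      using \<open>0 \<le> T\<close> by (intro integrable_indicator_kernel) auto
    show "integrable lborel (\<lambda>u. indicator {sqrt a..<m} u * (8 * weight_max / x))"
      by (rule integrable_indicator_Ico_const)
    show "\<bar>indicator {sqrt a..<m} u * kernel T u\<bar> \<le> indicator {sqrt a..<m} u * (8 * weight_max / x)" for u
    proof (cases "u \<in> {sqrt a..<m}")
      case True
      then have "0 \<le> u"
        using order_trans[OF real_sqrt_ge_zero[OF \<open>0 \<le> a\<close>]] by auto
      moreover have "u \<le> sqrt (x / 2)"
        using True by (auto simp: m_def c\<^sub>0_def max_def split: if_splits)
      ultimately show ?thesis
        using abs_kernel_le_near_zero[OF \<open>0 \<le> T\<close>] True by simp
    qed simp
  qed
  also have "\<dots> = (m - sqrt a) * (8 * weight_max / x)"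
    by (simp add: m_def)
  also have "\<dots> \<le> c\<^sub>0 * (8 * weight_max / x)"
    using \<open>0 \<le> a\<close> \<open>0 < c\<^sub>0\<close> x_pos weight_max_pos by (intro mult_right_mono) (auto simp: m_def max_def)
  finally show "\<bar>kernel_tail T a\<bar> \<le> c\<^sub>0 * (8 * weight_max / x)
      + Si_sup * (2 * weight_max / c\<^sub>0 + 2 * (\<epsilon> + 1 / c\<^sub>0\<^sup>2) * (\<integral>u. weight u \<partial>lborel))"
    using split abs_integral_kernel_Ici_le[OF \<open>0 < c\<^sub>0\<close> _ \<open>0 \<le> T\<close>, of m] by (simp add: m_def)
qed

lemma sgn_phase:
  assumes "0 < u"
  shows "sgn (phase u) = sgn (u - sqrt x)"
proof -
  have "phase u = (u - sqrt x) * ((u + sqrt x) / 2)"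
    using x_pos by (simp add: phase_def algebra_simps power2_eq_square)
  then have "sgn (phase u) = sgn (u - sqrt x) * sgn ((u + sqrt x) / 2)"
    by (simp only: sgn_mult)
  moreover have "0 < (u + sqrt x) / 2"
    using assms x_pos by (simp add: add_pos_pos)
  ultimately show ?thesis
    by simp
qed

lemma ibp_factor_sqrt: "ibp_factor (sqrt x) = 2 / sqrt x"
  using x_pos by (simp add: ibp_factor_def weight_def phase_def)

lemma tendsto_integral_ibp_factor'_Si_phase:
  assumes "0 < c"
  shows "((\<lambda>T. \<integral>u. indicator {c..} u * (ibp_factor' u * Si_phase T u) \<partial>lborel)
    \<longlongrightarrow> (\<integral>u. indicator {c..} u * (ibp_factor' u * (pi / 2 * sgn (u - sqrt x))) \<partial>lborel)) at_top"
proof (rule integral_dominated_convergence_at_top[where w="\<lambda>u. Si_sup * (2 * (\<epsilon> + 1 / c\<^sup>2) * weight u)"])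
  show "integrable lborel (\<lambda>u. Si_sup * (2 * (\<epsilon> + 1 / c\<^sup>2) * weight u))"
    using integrable_weight by simp
  show "AE u in lborel. ((\<lambda>T. indicator {c..} u * (ibp_factor' u * Si_phase T u))
      \<longlongrightarrow> indicator {c..} u * (ibp_factor' u * (pi / 2 * sgn (u - sqrt x)))) at_top"
  proof (rule AE_I2)
    fix u
    show "((\<lambda>T. indicator {c..} u * (ibp_factor' u * Si_phase T u))
        \<longlongrightarrow> indicator {c..} u * (ibp_factor' u * (pi / 2 * sgn (u - sqrt x)))) at_top"
    proof (cases "c \<le> u")
      case True
      then show ?thesis
        using tendsto_mult_left[OF tendsto_Si_scaled_at_top[of "phase u"], of "ibp_factor' u"] assms
        by (simp add: Si_phase_def sgn_phase)
    qed simp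
  qed
  show "\<forall>\<^sub>F T in at_top. AE u in lborel. norm (indicator {c..} u * (ibp_factor' u * Si_phase T u))
      \<le> Si_sup * (2 * (\<epsilon> + 1 / c\<^sup>2) * weight u)"
    using ibp_factor'_bounded_le[OF assms abs_Si_phase_le] by (intro always_eventually allI AE_I2) simp
qed simp_all

lemma integral_ibp_factor'_sgn:
  assumes "0 < c" "c \<noteq> sqrt x"
  shows "(\<integral>u. indicator {c..} u * (ibp_factor' u * (pi / 2 * sgn (u - sqrt x))) \<partial>lborel)
    = pi / 2 * (if c < sqrt x then ibp_factor c - 2 * ibp_factor (sqrt x) else - ibp_factor c)"
proof (cases "c < sqrt x")
  case True
  have "0 < sqrt x"
    using x_pos by simp
  have integrable: "integrable lborel (\<lambda>u. indicator {c..} u * ibp_factor' u)" if "0 < c" for c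
    using integrable_ibp_factor'_bounded[OF that, of "\<lambda>_. 1" 1] by simp
  have "(\<integral>u. indicator {c..} u * (ibp_factor' u * (pi / 2 * sgn (u - sqrt x))) \<partial>lborel)
      = (\<integral>u. pi / 2 * (2 * (indicator {sqrt x..} u * ibp_factor' u) - indicator {c..} u * ibp_factor' u) \<partial>lborel)"
    using AE_lborel_singleton[of "sqrt x"] True
    by (intro integral_cong_AE) (auto simp: indicator_def elim!: eventually_mono)
  also have "\<dots> = pi / 2 * (ibp_factor c - 2 * ibp_factor (sqrt x))"
    using integrable[OF assms(1)] integrable[OF \<open>0 < sqrt x\<close>]
      integral_ibp_factor'[OF assms(1)] integral_ibp_factor'[OF \<open>0 < sqrt x\<close>]
    by simp
  finally show ?thesis
    using True by simp
next
  case False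
  then have "(\<integral>u. indicator {c..} u * (ibp_factor' u * (pi / 2 * sgn (u - sqrt x))) \<partial>lborel)
      = (\<integral>u. pi / 2 * (indicator {c..} u * ibp_factor' u) \<partial>lborel)"
    using assms by (intro Bochner_Integration.integral_cong) (auto simp: indicator_def)
  then show ?thesis
    using False assms by (simp add: integral_ibp_factor')
qed

lemma tendsto_kernel_tail:
  assumes "0 < a" "a \<noteq> x"
  shows "((\<lambda>T. kernel_tail T a) \<longlongrightarrow> (if a < x then 2 * pi / sqrt x else 0)) at_top"
proof -
  define b where "b = sqrt a"
  have "0 < b" "b \<noteq> sqrt x" and b_less: "b < sqrt x \<longleftrightarrow> a < x"
    using assms x_pos by (auto simp: b_def)
  have "((\<lambda>T. - ibp_factor b * Si_phase T b - (\<integral>u. indicator {b..} u * (ibp_factor' u * Si_phase T u) \<partial>lborel))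
      \<longlongrightarrow> - ibp_factor b * (pi / 2 * sgn (b - sqrt x))
        - pi / 2 * (if b < sqrt x then ibp_factor b - 2 * ibp_factor (sqrt x) else - ibp_factor b)) at_top"
    unfolding integral_ibp_factor'_sgn[OF \<open>0 < b\<close> \<open>b \<noteq> sqrt x\<close>, symmetric] Si_phase_def
    using tendsto_Si_scaled_at_top[of "phase b"] \<open>0 < b\<close>
    by (intro tendsto_intros tendsto_integral_ibp_factor'_Si_phase[unfolded Si_phase_def])
      (simp_all add: sgn_phase)
  moreover have "\<forall>\<^sub>F T in at_top. - ibp_factor b * Si_phase T b
      - (\<integral>u. indicator {b..} u * (ibp_factor' u * Si_phase T u) \<partial>lborel) = kernel_tail T a"
    using eventually_ge_at_top[of 0]
    by eventually_elim (simp add: kernel_tail_def b_def[symmetric] integral_kernel_by_parts[OF \<open>0 < b\<close>])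
  ultimately have "((\<lambda>T. kernel_tail T a) \<longlongrightarrow> - ibp_factor b * (pi / 2 * sgn (b - sqrt x))
      - pi / 2 * (if b < sqrt x then ibp_factor b - 2 * ibp_factor (sqrt x) else - ibp_factor b)) at_top"
    by (rule Lim_transform_eventually)
  moreover have "sgn (b - sqrt x) = (if a < x then - 1 else 1)"
    using \<open>b \<noteq> sqrt x\<close> b_less by (auto simp: sgn_if)
  ultimately show ?thesis
    using x_pos by (cases "a < x") (simp_all add: b_less ibp_factor_sqrt field_simps)
qed

definition line_exp :: "real \<Rightarrow> complex" where
  "line_exp t = exp (Complex \<epsilon> t * complex_of_real x / 2)"

lemma norm_line_exp: "norm (line_exp t) = weight_max"
  by (simp add: line_exp_def norm_exp_eq_Re weight_max_def)

lemma borel_measurable_line_exp[measurable]: "line_exp \<in> borel_measurable borel"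
  unfolding line_exp_def by measurable

lemma gauss_tail_kernel_mult_line_exp:
  "gauss_tail_kernel (Complex \<epsilon> t) a u * line_exp t
    = indicator {sqrt a..} u *\<^sub>R (complex_of_real (weight u) * exp (- (\<i> * complex_of_real (t * phase u))))"
proof (cases "sqrt a \<le> u")
  case True
  have "- Complex \<epsilon> t * (complex_of_real u)\<^sup>2 / 2 + Complex \<epsilon> t * complex_of_real x / 2
      = complex_of_real (- \<epsilon> * phase u) + - (\<i> * complex_of_real (t * phase u))"
    unfolding phase_def by (simp add: complex_eq_iff field_simps)
  then show ?thesis
    using True
    by (simp add: gauss_tail_kernel_def line_exp_def weight_def exp_add[symmetric] exp_of_real[symmetric])
qed (simp add: gauss_tail_kernel_def)

lemma integral_gauss_tail_line:
  assumes "0 \<le> T"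
  shows "(\<integral>t. indicator {-T..T} t *\<^sub>R (gauss_tail (Complex \<epsilon> t) a * line_exp t) \<partial>lborel)
    = complex_of_real (kernel_tail T a)"
proof -
  define G where "G t u = indicator {-T..T} t *\<^sub>R (gauss_tail_kernel (Complex \<epsilon> t) a u * line_exp t)" for t u
  have G_eq: "G t u = (indicator {-T..T} t * indicator {sqrt a..} u) *\<^sub>R
      (complex_of_real (weight u) * exp (- (\<i> * complex_of_real (t * phase u))))" for t u
    by (simp add: G_def gauss_tail_kernel_mult_line_exp)
  have "integrable (lborel \<Otimes>\<^sub>M lborel) (\<lambda>z. indicator {-T..T} (fst z) * weight (snd z))"
    by (intro integrable_lborel_product integrable_weight) (simp add: emeasure_lborel_Icc_eq)
  then have G_integrable: "integrable (lborel \<Otimes>\<^sub>M lborel) (\<lambda>(t, u). G t u)"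
  proof (rule Bochner_Integration.integrable_bound)
    show "(\<lambda>(t, u). G t u) \<in> borel_measurable (lborel \<Otimes>\<^sub>M lborel)"
      unfolding G_eq split_beta' weight_def phase_def by measurable
    show "AE z in lborel \<Otimes>\<^sub>M lborel. norm ((\<lambda>(t, u). G t u) z) \<le> norm (indicator {-T..T} (fst z) * weight (snd z))"
      using weight_pos by (intro AE_I2) (auto simp: G_eq indicator_def norm_mult split_beta' less_imp_le)
  qed
  have "(\<integral>t. indicator {-T..T} t *\<^sub>R (gauss_tail (Complex \<epsilon> t) a * line_exp t) \<partial>lborel)
      = (\<integral>t. \<integral>u. G t u \<partial>lborel \<partial>lborel)"
    unfolding G_def gauss_tail_def
    by (simp add: integral_scaleR_right integral_mult_left_zero[symmetric] del: integral_mult_left_zero)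
  also have "\<dots> = (\<integral>u. \<integral>t. G t u \<partial>lborel \<partial>lborel)"
    using lborel_pair.Fubini_integral[OF G_integrable] by simp
  also have "\<dots> = (\<integral>u. complex_of_real (indicator {sqrt a..} u * kernel T u) \<partial>lborel)"
  proof (rule Bochner_Integration.integral_cong[OF refl])
    fix u
    have "(\<integral>t. G t u \<partial>lborel) = complex_of_real (indicator {sqrt a..} u * weight u)
        * (\<integral>t. indicator {-T..T} t *\<^sub>R exp (- (\<i> * complex_of_real (t * phase u))) \<partial>lborel)"
      by (simp add: G_eq integral_mult_right_zero[symmetric] mult_ac scaleR_conv_of_real del: integral_mult_right_zero)
    then show "(\<integral>t. G t u \<partial>lborel) = complex_of_real (indicator {sqrt a..} u * kernel T u)"
      by (simp only: integral_exp_imag_interval[OF assms]) (simp add: kernel_def)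
  qed
  also have "\<dots> = complex_of_real (kernel_tail T a)"
    unfolding kernel_tail_def by (rule integral_complex_of_real)
  finally show ?thesis .
qed

end

section \<open>Bromwich inversion\<close>

locale bromwich_setting = nonneg_density_rv M X f + bromwich_kernel x \<epsilon>
  for M :: "'a measure" and X f x \<epsilon>
begin

lemma borel_measurable_kernel_tail[measurable]: "(\<lambda>\<omega>. kernel_tail T (X \<omega>)) \<in> borel_measurable M"
proof -
  have "(\<lambda>z::real \<times> real. indicator {sqrt (fst z)..} (snd z) * kernel T (snd z)) \<in> borel_measurable (borel \<Otimes>\<^sub>M lborel)"
    unfolding kernel_def weight_def phase_def indicator_def atLeast_iff by measurable
  then have "(\<lambda>a. kernel_tail T a) \<in> borel_measurable borel"
    unfolding kernel_tail_def by (intro lborel.borel_measurable_lebesgue_integral) (simp add: split_beta')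
  then show ?thesis
    by measurable
qed

lemma integral_line_gauss_tail_transform:
  assumes "0 \<le> T"
  shows "(\<integral>t. indicator {-T..T} t *\<^sub>R (gauss_tail_transform (Complex \<epsilon> t) * line_exp t) \<partial>lborel)
    = complex_of_real (\<integral>\<omega>. kernel_tail T (X \<omega>) \<partial>M)"
proof -
  interpret pair_sigma_finite lborel M
    by unfold_locales
  define G where "G t \<omega> = indicator {-T..T} t *\<^sub>R (gauss_tail (Complex \<epsilon> t) (X \<omega>) * line_exp t)" for t \<omega>
  define K where "K = (\<integral>u. exp (- (\<epsilon> / 2) * u\<^sup>2) \<partial>lborel)"
  have "integrable (lborel \<Otimes>\<^sub>M M) (\<lambda>z. indicator {-T..T} (fst z) * (K * weight_max))"
    by (intro Fubini_integrable) (auto simp: prob_space emeasure_lborel_Icc_eq abs_mult)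
  then have G_integrable: "integrable (lborel \<Otimes>\<^sub>M M) (\<lambda>(t, \<omega>). G t \<omega>)"
  proof (rule Bochner_Integration.integrable_bound)
    show "(\<lambda>(t, \<omega>). G t \<omega>) \<in> borel_measurable (lborel \<Otimes>\<^sub>M M)"
      unfolding G_def split_beta' by measurable
    have "norm (G t \<omega>) \<le> indicator {-T..T} t * (K * weight_max)" for t \<omega>
      using norm_gauss_tail_le[of "\<epsilon>" "Complex \<epsilon> t" "X \<omega>"] \<epsilon>_pos
      using weight_max_pos
      by (auto simp: G_def K_def indicator_def norm_mult norm_line_exp intro: mult_right_mono)
    then show "AE z in lborel \<Otimes>\<^sub>M M. norm ((\<lambda>(t, \<omega>). G t \<omega>) z)
        \<le> norm (indicator {-T..T} (fst z) * (K * weight_max))"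
      by (intro AE_I2) (auto simp: split_beta' intro: order_trans[OF _ abs_ge_self])
  qed
  have "(\<integral>t. indicator {-T..T} t *\<^sub>R (gauss_tail_transform (Complex \<epsilon> t) * line_exp t) \<partial>lborel)
      = (\<integral>t. \<integral>\<omega>. G t \<omega> \<partial>M \<partial>lborel)"
    unfolding G_def gauss_tail_transform_def
    by (simp add: integral_scaleR_right integral_mult_left_zero[symmetric] del: integral_mult_left_zero)
  also have "\<dots> = (\<integral>\<omega>. \<integral>t. G t \<omega> \<partial>lborel \<partial>M)"
    using Fubini_integral[OF G_integrable] by simp
  also have "\<dots> = (\<integral>\<omega>. complex_of_real (kernel_tail T (X \<omega>)) \<partial>M)"
    unfolding G_def using integral_gauss_tail_line[OF assms] by simp
  also have "\<dots> = complex_of_real (\<integral>\<omega>. kernel_tail T (X \<omega>) \<partial>M)"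
    by (rule integral_complex_of_real)
  finally show ?thesis .
qed

lemma integral_bromwich_integrand:
  assumes holo: "\<Phi> holomorphic_on {p. 0 < Re p}"
    and agree: "\<forall>p>0. \<Phi> (complex_of_real p) = complex_of_real (gaussQ_transform M X p)"
    and "0 \<le> T"
  shows "integral {-T..T} (bromwich_integrand \<Phi> \<epsilon> x)
    = \<i> / complex_of_real (sqrt (2 * pi)) * complex_of_real (\<integral>\<omega>. kernel_tail T (X \<omega>) \<partial>M)"
proof -
  define h where "h t = \<i> / complex_of_real (sqrt (2 * pi)) * (gauss_tail_transform (Complex \<epsilon> t) * line_exp t)" for t
  have "bromwich_integrand \<Phi> \<epsilon> x = h"
  proof
    fix t
    have "Complex \<epsilon> t \<noteq> 0"
      using \<epsilon>_pos by (simp add: complex_eq_iff)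
    moreover have "\<Phi> (Complex \<epsilon> t)
        = csqrt (Complex \<epsilon> t) * gauss_tail_transform (Complex \<epsilon> t) / complex_of_real (sqrt (2 * pi))"
      using \<epsilon>_pos by (intro holomorphic_extension_eq[OF holo agree]) simp
    ultimately show "bromwich_integrand \<Phi> \<epsilon> x t = h t"
      unfolding bromwich_integrand_def h_def line_exp_def Let_def by (simp add: field_simps)
  qed
  moreover have cont_h: "continuous_on {-T..T} h"
  proof -
    have "continuous_on UNIV (\<lambda>t. gauss_tail_transform (Complex \<epsilon> t))"
      unfolding Complex_eq using \<epsilon>_pos
      by (intro continuous_on_compose2[OF holomorphic_on_imp_continuous_on[OF holomorphic_gauss_tail_transform]]
          continuous_intros) auto
    then show ?thesis
      unfolding h_def line_exp_def Complex_eq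
      by (intro continuous_intros) (auto simp: Complex_eq intro: continuous_on_subset)
  qed
  ultimately have "integral {-T..T} (bromwich_integrand \<Phi> \<epsilon> x) = (\<integral>t. indicator {-T..T} t *\<^sub>R h t \<partial>lborel)"
    using set_borel_integral_eq_integral(2)[OF borel_integrable_atLeastAtMost'[OF cont_h]]
    by (simp add: set_lebesgue_integral_def)
  also have "\<dots> = \<i> / complex_of_real (sqrt (2 * pi))
      * (\<integral>t. indicator {-T..T} t *\<^sub>R (gauss_tail_transform (Complex \<epsilon> t) * line_exp t) \<partial>lborel)"
    unfolding h_def by (simp add: integral_mult_right_zero[symmetric] del: integral_mult_right_zero)
  finally show ?thesis
    by (simp add: integral_line_gauss_tail_transform[OF assms(3)])
qed

lemma tendsto_expectation_kernel_tail:
  "((\<lambda>T. \<integral>\<omega>. kernel_tail T (X \<omega>) \<partial>M) \<longlongrightarrow> 2 * pi / sqrt x * strict_cdf x) at_top"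
proof -
  obtain B where B: "\<And>T a. 0 \<le> T \<Longrightarrow> 0 \<le> a \<Longrightarrow> \<bar>kernel_tail T a\<bar> \<le> B"
    using bounded_kernel_tail by blast
  have "((\<lambda>T. \<integral>\<omega>. kernel_tail T (X \<omega>) \<partial>M) \<longlongrightarrow> (\<integral>\<omega>. 2 * pi / sqrt x * indicator {..<x} (X \<omega>) \<partial>M)) at_top"
  proof (rule integral_dominated_convergence_at_top[where w="\<lambda>_. B"])
    show "AE \<omega> in M. ((\<lambda>T. kernel_tail T (X \<omega>)) \<longlongrightarrow> 2 * pi / sqrt x * indicator {..<x} (X \<omega>)) at_top"
      using AE_X_pos AE_X_neq[of x]
    proof eventually_elim
      case (elim \<omega>)
      then show ?case
        using tendsto_kernel_tail[of "X \<omega>"] by (cases "X \<omega> < x") (simp_all add: indicator_def)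
    qed
    show "\<forall>\<^sub>F T in at_top. AE \<omega> in M. norm (kernel_tail T (X \<omega>)) \<le> B"
      using eventually_ge_at_top[of 0] by eventually_elim (auto intro!: AE_I2 B X_nonneg)
  qed auto
  then show ?thesis
    by (simp add: strict_cdf_def)
qed

lemma bromwich_eq:
  assumes holo: "\<Phi> holomorphic_on {p. 0 < Re p}"
    and agree: "\<forall>p>0. \<Phi> (complex_of_real p) = complex_of_real (gaussQ_transform M X p)"
  shows "((\<lambda>T. integral {-T..T} (bromwich_integrand \<Phi> \<epsilon> x)) \<longlongrightarrow> bromwich \<Phi> \<epsilon> x) at_top"
    and "bromwich \<Phi> \<epsilon> x = \<i> * complex_of_real (sqrt (2 * pi) / sqrt x * strict_cdf x)"
proof -
  have "2 * pi / sqrt x * strict_cdf x / sqrt (2 * pi) = (2 * pi / sqrt (2 * pi)) / sqrt x * strict_cdf x"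
    by simp
  also have "2 * pi / sqrt (2 * pi) = sqrt (2 * pi)"
    by (rule real_div_sqrt) simp
  finally have "\<i> / complex_of_real (sqrt (2 * pi)) * complex_of_real (2 * pi / sqrt x * strict_cdf x)
      = \<i> * complex_of_real (sqrt (2 * pi) / sqrt x * strict_cdf x)"
    by (metis (no_types, lifting) of_real_divide times_divide_eq_left times_divide_eq_right)
  moreover have "((\<lambda>T. \<i> / complex_of_real (sqrt (2 * pi)) * complex_of_real (\<integral>\<omega>. kernel_tail T (X \<omega>) \<partial>M))
      \<longlongrightarrow> \<i> / complex_of_real (sqrt (2 * pi)) * complex_of_real (2 * pi / sqrt x * strict_cdf x)) at_top"
    by (intro tendsto_intros tendsto_expectation_kernel_tail)
  moreover have "\<forall>\<^sub>F T in at_top. \<i> / complex_of_real (sqrt (2 * pi)) * complex_of_real (\<integral>\<omega>. kernel_tail T (X \<omega>) \<partial>M)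
      = integral {-T..T} (bromwich_integrand \<Phi> \<epsilon> x)"
    using eventually_ge_at_top[of 0]
    by eventually_elim (simp add: integral_bromwich_integrand[OF holo agree])
  ultimately have lim: "((\<lambda>T. integral {-T..T} (bromwich_integrand \<Phi> \<epsilon> x))
      \<longlongrightarrow> \<i> * complex_of_real (sqrt (2 * pi) / sqrt x * strict_cdf x)) at_top"
    by (simp add: tendsto_cong)
  then show "bromwich \<Phi> \<epsilon> x = \<i> * complex_of_real (sqrt (2 * pi) / sqrt x * strict_cdf x)"
    unfolding bromwich_def by (intro tendsto_Lim) simp_all
  with lim show "((\<lambda>T. integral {-T..T} (bromwich_integrand \<Phi> \<epsilon> x)) \<longlongrightarrow> bromwich \<Phi> \<epsilon> x) at_top"
    by simp
qed

end

context nonneg_density_rv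
begin

lemma bromwich_inversion:
  assumes holo: "\<Phi> holomorphic_on {p. 0 < Re p}"
    and agree: "\<forall>p>0. \<Phi> (complex_of_real p) = complex_of_real (gaussQ_transform M X p)"
    and "0 < \<epsilon>"
  shows "(\<forall>x>0. ((\<lambda>T. integral {-T..T} (bromwich_integrand \<Phi> \<epsilon> x)) \<longlongrightarrow> bromwich \<Phi> \<epsilon> x) at_top)
    \<and> (AE x in lborel. 0 < x \<longrightarrow>
         ((\<lambda>y. 1 / (\<i> * complex_of_real (sqrt (2 * pi))) * complex_of_real (sqrt y) * bromwich \<Phi> \<epsilon> y)
            has_vector_derivative complex_of_real (f x)) (at x))"
proof -
  have setting: "bromwich_setting M X f x \<epsilon>" if "0 < x" for x
    using that \<open>0 < \<epsilon>\<close> by unfold_locales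
  have cancel: "1 / (\<i> * complex_of_real s) * complex_of_real r * (\<i> * complex_of_real (s / r * c))
      = complex_of_real c" if "0 < s" "0 < r" for s r c :: real
    using that by (simp add: field_simps)
  have cdf_eq: "1 / (\<i> * complex_of_real (sqrt (2 * pi))) * complex_of_real (sqrt y) * bromwich \<Phi> \<epsilon> y
      = complex_of_real (strict_cdf y)" if "0 < y" for y
    unfolding bromwich_setting.bromwich_eq(2)[OF setting[OF that] holo agree]
    using that by (intro cancel) auto
  show ?thesis
  proof (intro conjI allI impI)
    show "((\<lambda>T. integral {-T..T} (bromwich_integrand \<Phi> \<epsilon> x)) \<longlongrightarrow> bromwich \<Phi> \<epsilon> x) at_top"
      if "0 < x" for x
      using bromwich_setting.bromwich_eq(1)[OF setting[OF that] holo agree] .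
    show "AE x in lborel. 0 < x \<longrightarrow>
        ((\<lambda>y. 1 / (\<i> * complex_of_real (sqrt (2 * pi))) * complex_of_real (sqrt y) * bromwich \<Phi> \<epsilon> y)
          has_vector_derivative complex_of_real (f x)) (at x)"
      using AE_has_real_derivative_strict_cdf
    proof eventually_elim
      case (elim x)
      show ?case
      proof
        assume "0 < x"
        have "((\<lambda>y. complex_of_real (strict_cdf y)) has_vector_derivative complex_of_real (f x)) (at x)"
          using elim by (auto intro!: derivative_eq_intros simp: has_real_derivative_iff_has_vector_derivative[symmetric])
        then show "((\<lambda>y. 1 / (\<i> * complex_of_real (sqrt (2 * pi))) * complex_of_real (sqrt y) * bromwich \<Phi> \<epsilon> y)
            has_vector_derivative complex_of_real (f x)) (at x)"
          by (rule has_vector_derivative_transform_within_open[where S="{0<..}"])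
            (use \<open>0 < x\<close> cdf_eq in auto)
      qed
    qed
  qed
qed

end

theorem lemma1:
  fixes M :: "'a measure" and X :: "'a \<Rightarrow> real" and f :: "real \<Rightarrow> real"
  assumes "prob_space M"
    and "\<forall>\<omega>\<in>space M. X \<omega> \<ge> 0"
    and "f \<in> borel_measurable borel"
    and "\<forall>x. f x \<ge> 0"
    and "distributed M lborel X (\<lambda>x. ennreal (f x))"
  shows "(\<forall>p\<ge>0. integrable M (\<lambda>\<omega>. gaussQ (sqrt (p * X \<omega>))))
    \<and> continuous_on {0..} (gaussQ_transform M X)
    \<and> (\<forall>p q. 0 \<le> p \<and> p < q \<longrightarrow> gaussQ_transform M X q < gaussQ_transform M X p)
    \<and> gaussQ_transform M X 0 = 1 / 2
    \<and> (gaussQ_transform M X \<longlongrightarrow> 0) at_top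
    \<and> (\<forall>\<Phi>. \<Phi> holomorphic_on {p. Re p > 0}
           \<and> (\<forall>p>0. \<Phi> (complex_of_real p) = complex_of_real (gaussQ_transform M X p))
         \<longrightarrow> (\<forall>\<epsilon>>0.
               (\<forall>x>0. ((\<lambda>T. integral {-T..T} (bromwich_integrand \<Phi> \<epsilon> x))
                          \<longlongrightarrow> bromwich \<Phi> \<epsilon> x) at_top)
             \<and> (AE x in lborel. x > 0 \<longrightarrow>
                  ((\<lambda>y. 1 / (\<i> * complex_of_real (sqrt (2 * pi)))
                          * complex_of_real (sqrt y) * bromwich \<Phi> \<epsilon> y)
                     has_vector_derivative complex_of_real (f x)) (at x))))"
proof -
  interpret nonneg_density_rv M X f
    using assms by (intro nonneg_density_rv.intro nonneg_density_rv_axioms.intro) simp_all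
  have inversion: "\<forall>\<Phi>. \<Phi> holomorphic_on {p. Re p > 0}
        \<and> (\<forall>p>0. \<Phi> (complex_of_real p) = complex_of_real (gaussQ_transform M X p))
      \<longrightarrow> (\<forall>\<epsilon>>0. (\<forall>x>0. ((\<lambda>T. integral {-T..T} (bromwich_integrand \<Phi> \<epsilon> x)) \<longlongrightarrow> bromwich \<Phi> \<epsilon> x) at_top)
        \<and> (AE x in lborel. x > 0 \<longrightarrow>
             ((\<lambda>y. 1 / (\<i> * complex_of_real (sqrt (2 * pi))) * complex_of_real (sqrt y) * bromwich \<Phi> \<epsilon> y)
                has_vector_derivative complex_of_real (f x)) (at x)))"
    by (intro allI impI, elim conjE) (rule bromwich_inversion)
  show ?thesis
  proof (intro conjI)
    show "\<forall>p\<ge>0. integrable M (\<lambda>\<omega>. gaussQ (sqrt (p * X \<omega>)))"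
      using integrable_gaussQ_sqrt[OF measurable_X] by blast
    show "continuous_on {0..} (gaussQ_transform M X)"
      by (rule continuous_on_gaussQ_transform[OF measurable_X])
    show "\<forall>p q. 0 \<le> p \<and> p < q \<longrightarrow> gaussQ_transform M X q < gaussQ_transform M X p"
      using gaussQ_transform_strict_antimono by blast
  qed (fact gaussQ_transform_0 tendsto_gaussQ_transform_at_top inversion)+
qed

end
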